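(* Let $\rho\colon[0,1]^2\times\mathbb{R}^n\to\mathbb{R}$ be a continuously differentiable two-parameter family of probability densities with $\rho(s,t,\cdot)\in\mathcal P_2(\mathbb{R}^n)$, let $v_s,v_t\colon[0,1]^2\times\mathbb{R}^n\to\mathbb{R}^n$ be continuously differentiable vector fields, and write $$A(s,t)=\sqrt{\int \|v_s\|^2\rho\, dx\cdot \int\|v_t\|^2\rho\, dx-\Big(\int v_s\cdot v_t\,\rho\, dx\Big)^2 }.$$ Suppose there exist functions $\Phi_s,\Phi_t\colon[0,1]^2\times\mathbb{R}^n\to\mathbb{R}$ such that $$A^{-1}\Big[v_s\int \|v_t\|^2\rho\,dx-v_t\int v_s\cdot v_t\,\rho\,dx\Big]=\nabla\Phi_s,\qquad A^{-1}\Big[v_t\int \|v_s\|^2\rho\,dx-v_s\int v_s\cdot v_t\,\rho\,dx\Big]=\nabla\Phi_t,$$ $$\partial_s\Phi_s+\partial_t\Phi_t+A^{-1}\Big[\tfrac{1}{2}\|v_s\|^2\int \|v_t\|^2\rho\,dx +\tfrac{1}{2}\|v_t\|^2\int\|v_s\|^2\rho\,dx - (v_t\cdot v_s)\int v_t\cdot v_s\,\rho\, dx\Big]=0,$$ $$\partial_s\rho+\nabla\cdot (\rho v_s)=0,\qquad \partial_t\rho+\nabla\cdot (\rho v_t)=0.$$ Then $\rho$ is a critical point of the variational problem $$\inf_{v_s,v_t,\rho}\int_0^1\int_0^1 A(s,t)\,ds\,dt$$ subject to the continuity equations $\partial_s\rho+\nabla\cdot(\rho v_s)=0$, $\partial_t\rho+\nabla\cdot(\rho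 v_t)=0$, with the four boundary curves $\rho(0,t,\cdot)$, $\rho(1,t,\cdot)$, $\rho(s,0,\cdot)$, $\rho(s,1,\cdot)$, $s,t\in[0,1]$, held fixed.
   Context: All integrals $\int$ without limits are over $\mathbb{R}^n$. $\mathcal P_2(\mathbb{R}^n)$ denotes probability densities on $\mathbb{R}^n$ with finite second moments. The boundary data consist of four densities $\rho(0,0,\cdot),\rho(0,1,\cdot),\rho(1,0,\cdot),\rho(1,1,\cdot)$ in $\mathcal P_2$ and the four Wasserstein-2 geodesics $\rho(0,t,\cdot)$, $\rho(1,t,\cdot)$, $\rho(s,0,\cdot)$, $\rho(s,1,\cdot)$ ($s,t\in[0,1]$) connecting them, forming a "rectangle" in density space. The minimization is over two-parameter density surfaces $\rho$ and vector fields $v_s,v_t$ with these boundary values. "Critical point" refers to vanishing of the $L^2$ first variation of the associated Lagrangian (with multipliers $\Phi_s,\Phi_t$ for the two continuity constraints) in all variables. *)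

theory Defs
  imports "HOL-Analysis.Analysis"
begin

definition C1_on :: "'a::real_normed_vector set \<Rightarrow> ('a \<Rightarrow> 'b::real_normed_vector) \<Rightarrow> bool" where
  "C1_on S f \<longleftrightarrow> (\<exists>f'. (\<forall>p\<in>S. (f has_derivative blinfun_apply (f' p)) (at p within S))
                        \<and> continuous_on S f')"

definition unc :: "(real \<Rightarrow> real \<Rightarrow> 'x \<Rightarrow> 'b) \<Rightarrow> real \<times> real \<times> 'x \<Rightarrow> 'b" where
  "unc f = (\<lambda>(s,t,x). f s t x)"

definition Dom :: "(real \<times> real \<times> (real^'n)) set" where
  "Dom = {0..1} \<times> {0..1} \<times> UNIV"
definition IntDom :: "(real \<times> real \<times> (real^'n)) set" where
  "IntDom = {0<..<1} \<times> {0<..<1} \<times> UNIV"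

definition ds :: "(real \<Rightarrow> real \<Rightarrow> real^'n \<Rightarrow> real) \<Rightarrow> real \<Rightarrow> real \<Rightarrow> real^'n \<Rightarrow> real" where
  "ds f s t x = deriv (\<lambda>\<sigma>. f \<sigma> t x) s"
definition dt :: "(real \<Rightarrow> real \<Rightarrow> real^'n \<Rightarrow> real) \<Rightarrow> real \<Rightarrow> real \<Rightarrow> real^'n \<Rightarrow> real" where
  "dt f s t x = deriv (\<lambda>\<tau>. f s \<tau> x) t"
definition grad :: "(real \<Rightarrow> real \<Rightarrow> real^'n \<Rightarrow> real) \<Rightarrow> real \<Rightarrow> real \<Rightarrow> real^'n \<Rightarrow> real^'n" where
  "grad f s t x = (\<chi> i. deriv (\<lambda>h. f s t (x + h *\<^sub>R axis i 1)) 0)"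
definition divg :: "(real \<Rightarrow> real \<Rightarrow> real^'n \<Rightarrow> real^'n) \<Rightarrow> real \<Rightarrow> real \<Rightarrow> real^'n \<Rightarrow> real" where
  "divg w s t x = (\<Sum>i\<in>UNIV. deriv (\<lambda>h. w s t (x + h *\<^sub>R axis i 1) $ i) 0)"

definition Gss :: "(real \<Rightarrow> real \<Rightarrow> real^'n \<Rightarrow> real) \<Rightarrow> (real \<Rightarrow> real \<Rightarrow> real^'n \<Rightarrow> real^'n) \<Rightarrow> real \<Rightarrow> real \<Rightarrow> real" where
  "Gss \<rho> v s t = (LINT x|lborel. (norm (v s t x))\<^sup>2 * \<rho> s t x)"
definition Gst :: "(real \<Rightarrow> real \<Rightarrow> real^'n \<Rightarrow> real) \<Rightarrow> (real \<Rightarrow> real \<Rightarrow> real^'n \<Rightarrow> real^'n) \<Rightarrow> (real \<Rightarrow> real \<Rightarrow> real^'n \<Rightarrow> real^'n) \<Rightarrow> real \<Rightarrow> real \<Rightarrow> real" where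
  "Gst \<rho> v w s t = (LINT x|lborel. (v s t x \<bullet> w s t x) * \<rho> s t x)"
definition Aarea :: "(real \<Rightarrow> real \<Rightarrow> real^'n \<Rightarrow> real) \<Rightarrow> (real \<Rightarrow> real \<Rightarrow> real^'n \<Rightarrow> real^'n) \<Rightarrow> (real \<Rightarrow> real \<Rightarrow> real^'n \<Rightarrow> real^'n) \<Rightarrow> real \<Rightarrow> real \<Rightarrow> real" where
  "Aarea \<rho> vs vt s t = sqrt (Gss \<rho> vs s t * Gss \<rho> vt s t - (Gst \<rho> vs vt s t)\<^sup>2)"

text \<open>Density (in s,t,x) of the multiplier part of the Lagrangian
  L = int int A ds dt + int int int [Phi_s (d_s rho + div(rho v_s)) + Phi_t (d_t rho + div(rho v_t))] dx ds dt.\<close>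
definition lag_density ::
  "(real \<Rightarrow> real \<Rightarrow> real^'n \<Rightarrow> real) \<Rightarrow> (real \<Rightarrow> real \<Rightarrow> real^'n \<Rightarrow> real^'n) \<Rightarrow> (real \<Rightarrow> real \<Rightarrow> real^'n \<Rightarrow> real^'n)
   \<Rightarrow> (real \<Rightarrow> real \<Rightarrow> real^'n \<Rightarrow> real) \<Rightarrow> (real \<Rightarrow> real \<Rightarrow> real^'n \<Rightarrow> real) \<Rightarrow> real \<Rightarrow> real \<Rightarrow> real^'n \<Rightarrow> real" where
  "lag_density \<rho> vs vt \<Phi>s \<Phi>t s t x =
     \<Phi>s s t x * (ds \<rho> s t x + divg (\<lambda>s t x. \<rho> s t x *\<^sub>R vs s t x) s t x)
   + \<Phi>t s t x * (dt \<rho> s t x + divg (\<lambda>s t x. \<rho> s t x *\<^sub>R vt s t x) s t x)"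

text \<open>Test perturbations: C^1 with compact support inside (0,1)^2 x R^n
  (so they vanish near the four boundary curves, which are held fixed).\<close>
definition test_fun :: "(real \<Rightarrow> real \<Rightarrow> real^'n \<Rightarrow> 'b::real_normed_vector) \<Rightarrow> bool" where
  "test_fun \<phi> \<longleftrightarrow> C1_on UNIV (unc \<phi>) \<and>
     (\<exists>K. compact K \<and> K \<subseteq> IntDom \<and> (\<forall>p. p \<notin> K \<longrightarrow> unc \<phi> p = 0))"

definition pert :: "(real \<Rightarrow> real \<Rightarrow> real^'n \<Rightarrow> 'b::real_vector) \<Rightarrow> real \<Rightarrow> (real \<Rightarrow> real \<Rightarrow> real^'n \<Rightarrow> 'b) \<Rightarrow> real \<Rightarrow> real \<Rightarrow> real^'n \<Rightarrow> 'b" where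
  "pert f \<epsilon> g = (\<lambda>s t x. f s t x + \<epsilon> *\<^sub>R g s t x)"

definition first_var_integrand where
  "first_var_integrand \<rho> vs vt \<Phi>s \<Phi>t d\<rho> dvs dvt d\<Phi>s d\<Phi>t s t =
     deriv (\<lambda>\<epsilon>. Aarea (pert \<rho> \<epsilon> d\<rho>) (pert vs \<epsilon> dvs) (pert vt \<epsilon> dvt) s t) 0
   + (LINT x|lborel. deriv (\<lambda>\<epsilon>. lag_density (pert \<rho> \<epsilon> d\<rho>) (pert vs \<epsilon> dvs) (pert vt \<epsilon> dvt)
                                   (pert \<Phi>s \<epsilon> d\<Phi>s) (pert \<Phi>t \<epsilon> d\<Phi>t) s t x) 0)"

definition critical_point where
  "critical_point \<rho> vs vt \<Phi>s \<Phi>t \<longleftrightarrow>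
    (\<forall>d\<rho> dvs dvt d\<Phi>s d\<Phi>t.
      test_fun d\<rho> \<and> test_fun dvs \<and> test_fun dvt \<and> test_fun d\<Phi>s \<and> test_fun d\<Phi>t \<longrightarrow>
      (\<forall>s\<in>{0<..<1}. \<forall>t\<in>{0<..<1}.
         (\<lambda>\<epsilon>. Aarea (pert \<rho> \<epsilon> d\<rho>) (pert vs \<epsilon> dvs) (pert vt \<epsilon> dvt) s t) differentiable (at 0)
       \<and> (\<forall>x. (\<lambda>\<epsilon>. lag_density (pert \<rho> \<epsilon> d\<rho>) (pert vs \<epsilon> dvs) (pert vt \<epsilon> dvt)
                                (pert \<Phi>s \<epsilon> d\<Phi>s) (pert \<Phi>t \<epsilon> d\<Phi>t) s t x) differentiable (at 0))
       \<and> integrable lborel (\<lambda>x. deriv (\<lambda>\<epsilon>. lag_density (pert \<rho> \<epsilon> d\<rho>) (pert vs \<epsilon> dvs) (pert vt \<epsilon> dvt)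
                                (pert \<Phi>s \<epsilon> d\<Phi>s) (pert \<Phi>t \<epsilon> d\<Phi>t) s t x) 0))
      \<and> set_integrable lborel ({0<..<1} \<times> {0<..<1})
           (\<lambda>(s,t). first_var_integrand \<rho> vs vt \<Phi>s \<Phi>t d\<rho> dvs dvt d\<Phi>s d\<Phi>t s t)
      \<and> (LINT p:{0<..<1} \<times> {0<..<1}|lborel.
           (\<lambda>(s,t). first_var_integrand \<rho> vs vt \<Phi>s \<Phi>t d\<rho> dvs dvt d\<Phi>s d\<Phi>t s t) p) = 0)"

end

theory Submission
  imports Defs
begin

text \<open>
  Perturb (rho, v_s, v_t, Phi_s, Phi_t) by (r, a, b, p, q), supported in a compact subset of the
  open square times R^n. Along the perturbation the Lagrangian is polynomial in the perturbation
  parameter. The multiplier perturbations p, q only multiply the continuity equations and drop out.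
  The area term contributes the first variation of sqrt (Gss Gtt - Gst^2), namely
  (Gss' Gtt + Gss Gtt' - 2 Gst Gst') / (2 A). Integrating Phi div (r v + rho a) by parts in x turns
  it into - grad Phi . (r v + rho a); inserting the prescribed gradients of Phi_s and Phi_t cancels
  every term containing a or b against the area variation, and the Hamilton-Jacobi equation turns
  what is left into r (d_s Phi_s + d_t Phi_t). So the (s,t)-integrand of the first variation is the
  x-integral of d_s (Phi_s r) + d_t (Phi_t r), whose integral over the square vanishes because r has
  compact support there.
\<close>

section \<open>Continuously differentiable functions\<close>

lemma C1_on_subset:
  assumes "C1_on S f" "T \<subseteq> S"
  shows "C1_on T f"
proof -
  obtain D where D: "\<And>p. p \<in> S \<Longrightarrow> (f has_derivative blinfun_apply (D p)) (at p within S)"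
    and cD: "continuous_on S D"
    using assms(1) unfolding C1_on_def by blast
  show ?thesis
    unfolding C1_on_def
  proof (intro exI[of _ D] conjI ballI)
    show "(f has_derivative blinfun_apply (D p)) (at p within T)" if "p \<in> T" for p
      using has_derivative_subset[OF D assms(2)] that assms(2) by blast
    show "continuous_on T D" by (rule continuous_on_subset[OF cD assms(2)])
  qed
qed

lemma C1_on_open_has_derivative:
  assumes "C1_on S f" "open S"
  obtains D where "\<And>p. p \<in> S \<Longrightarrow> (f has_derivative blinfun_apply (D p)) (at p)"
    "continuous_on S D"
proof -
  obtain D where D: "\<And>p. p \<in> S \<Longrightarrow> (f has_derivative blinfun_apply (D p)) (at p within S)"
    and cD: "continuous_on S D"
    using assms(1) unfolding C1_on_def by blast
  show ?thesis
    by (rule that[OF _ cD]) (use D at_within_open[OF _ assms(2)] in simp)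
qed

lemma C1_on_imp_continuous_on: "C1_on S f \<Longrightarrow> continuous_on S f"
  unfolding C1_on_def by (auto intro: has_derivative_continuous_on)

lemma C1_on_const: "C1_on S (\<lambda>_. c)"
proof -
  have "((\<lambda>_. c) has_derivative blinfun_apply 0) (at p within S)" for p
    by (rule has_derivative_eq_rhs[OF has_derivative_const]) (simp add: fun_eq_iff)
  then show ?thesis
    unfolding C1_on_def by (intro exI[of _ "\<lambda>_. 0"]) simp
qed

lemma C1_on_add:
  assumes "C1_on S f" "C1_on S g"
  shows "C1_on S (\<lambda>p. f p + g p)"
proof -
  obtain D E where D: "\<And>p. p \<in> S \<Longrightarrow> (f has_derivative blinfun_apply (D p)) (at p within S)"
      and E: "\<And>p. p \<in> S \<Longrightarrow> (g has_derivative blinfun_apply (E p)) (at p within S)"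
      and "continuous_on S D" "continuous_on S E"
    using assms unfolding C1_on_def by blast
  then have "continuous_on S (\<lambda>p. D p + E p)" by (intro continuous_intros)
  moreover have "((\<lambda>p. f p + g p) has_derivative blinfun_apply (D p + E p)) (at p within S)"
    if "p \<in> S" for p
    using has_derivative_add[OF D[OF that] E[OF that]] by (simp add: plus_blinfun.rep_eq)
  ultimately show ?thesis
    unfolding C1_on_def by (intro exI[of _ "\<lambda>p. D p + E p"] conjI ballI)
qed

lemma C1_on_scaleR:
  fixes f :: "'a::real_normed_vector \<Rightarrow> real" and g :: "'a \<Rightarrow> 'b::real_normed_vector"
  assumes "C1_on S f" "C1_on S g"
  shows "C1_on S (\<lambda>p. f p *\<^sub>R g p)"
proof -
  obtain D E where D: "\<And>p. p \<in> S \<Longrightarrow> (f has_derivative blinfun_apply (D p)) (at p within S)"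
      and E: "\<And>p. p \<in> S \<Longrightarrow> (g has_derivative blinfun_apply (E p)) (at p within S)"
      and "continuous_on S D" "continuous_on S E"
    using assms unfolding C1_on_def by blast
  moreover have "continuous_on S f" "continuous_on S g"
    using assms by (simp_all add: C1_on_imp_continuous_on)
  ultimately have "continuous_on S (\<lambda>p. f p *\<^sub>R E p + (blinfun_scaleR_left (g p) o\<^sub>L D p))"
    by (intro continuous_intros)
  moreover have "((\<lambda>p. f p *\<^sub>R g p) has_derivative
      blinfun_apply (f p *\<^sub>R E p + (blinfun_scaleR_left (g p) o\<^sub>L D p))) (at p within S)"
    if "p \<in> S" for p
    using has_derivative_scaleR[OF D[OF that] E[OF that]]
    by (simp add: plus_blinfun.rep_eq scaleR_blinfun.rep_eq)
  ultimately show ?thesis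
    unfolding C1_on_def
    by (intro exI[of _ "\<lambda>p. f p *\<^sub>R E p + (blinfun_scaleR_left (g p) o\<^sub>L D p)"] conjI ballI)
qed

lemma C1_on_blinfun_apply:
  assumes "C1_on S f"
  shows "C1_on S (\<lambda>p. blinfun_apply L (f p))"
proof -
  obtain D where D: "\<And>p. p \<in> S \<Longrightarrow> (f has_derivative blinfun_apply (D p)) (at p within S)"
      and "continuous_on S D"
    using assms unfolding C1_on_def by blast
  then have "continuous_on S (\<lambda>p. L o\<^sub>L D p)" by (intro continuous_intros)
  moreover have "((\<lambda>p. L (f p)) has_derivative blinfun_apply (L o\<^sub>L D p)) (at p within S)"
    if "p \<in> S" for p
    by (rule bounded_linear.has_derivative[OF blinfun.bounded_linear_right D[OF that],
          THEN has_derivative_eq_rhs]) (simp add: fun_eq_iff)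
  ultimately show ?thesis
    unfolding C1_on_def by (intro exI[of _ "\<lambda>p. L o\<^sub>L D p"] conjI ballI)
qed

lemma unc_apply [simp]: "unc f (s, t, x) = f s t x"
  by (simp add: unc_def)

lemma unc_eq: "unc f = (\<lambda>p. f (fst p) (fst (snd p)) (snd (snd p)))"
  by (simp add: unc_def fun_eq_iff split_beta)

lemma C1_on_unc_add:
  "C1_on S (unc f) \<Longrightarrow> C1_on S (unc g) \<Longrightarrow> C1_on S (unc (\<lambda>s t x. f s t x + g s t x))"
  using C1_on_add[of S "unc f" "unc g"] by (simp add: unc_eq)

lemma C1_on_unc_scaleR:
  "C1_on S (unc f) \<Longrightarrow> C1_on S (unc g) \<Longrightarrow> C1_on S (unc (\<lambda>s t x. f s t x *\<^sub>R g s t x))"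
  using C1_on_scaleR[of S "unc f" "unc g"] by (simp add: unc_eq)

lemma C1_on_unc_mult:
  fixes f g :: "real \<Rightarrow> real \<Rightarrow> 'x::real_normed_vector \<Rightarrow> real"
  shows "C1_on S (unc f) \<Longrightarrow> C1_on S (unc g) \<Longrightarrow> C1_on S (unc (\<lambda>s t x. f s t x * g s t x))"
  using C1_on_unc_scaleR[of S f g] by simp

lemma C1_on_unc_component:
  fixes w :: "real \<Rightarrow> real \<Rightarrow> 'x::real_normed_vector \<Rightarrow> real^'n"
  shows "C1_on S (unc w) \<Longrightarrow> C1_on S (unc (\<lambda>s t x. w s t x $ i))"
  using C1_on_blinfun_apply[of S "unc w" "blinfun_inner_left (axis i 1)"]
  by (simp add: unc_eq inner_axis)

section \<open>Partial derivatives on the open parameter domain\<close>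

lemma open_IntDom: "open IntDom"
  unfolding IntDom_def by (intro open_Times open_greaterThanLessThan open_UNIV)

lemma IntDom_subset_Dom: "IntDom \<subseteq> Dom"
  unfolding IntDom_def Dom_def by auto

lemma mem_IntDom_iff [simp]: "(s, t, x) \<in> IntDom \<longleftrightarrow> s \<in> {0<..<1} \<and> t \<in> {0<..<1}"
  unfolding IntDom_def by auto

lemma has_real_derivative_along_line:
  fixes F :: "'a::real_normed_vector \<Rightarrow> real"
  assumes "(F has_derivative blinfun_apply D) (at (p + a *\<^sub>R w))"
  shows "((\<lambda>h. F (p + h *\<^sub>R w)) has_real_derivative D w) (at a)"
proof -
  have "((\<lambda>h. p + h *\<^sub>R w) has_derivative (\<lambda>h. h *\<^sub>R w)) (at a)"
    by (auto intro!: derivative_eq_intros)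
  from has_derivative_compose[OF this assms] show ?thesis
    unfolding has_field_derivative_def
    by (rule has_derivative_eq_rhs) (simp add: fun_eq_iff blinfun.scaleR_right)
qed

lemma partials_eq_blinfun:
  fixes f :: "real \<Rightarrow> real \<Rightarrow> real^'n \<Rightarrow> real"
  assumes "(unc f has_derivative blinfun_apply D) (at (s, t, x))"
  shows "((\<lambda>\<sigma>. f \<sigma> t x) has_real_derivative D (1, 0, 0)) (at s)"
    and "((\<lambda>\<tau>. f s \<tau> x) has_real_derivative D (0, 1, 0)) (at t)"
    and "((\<lambda>h. f s t (x + h *\<^sub>R axis i 1)) has_real_derivative D (0, 0, axis i 1)) (at 0)"
    and "ds f s t x = D (1, 0, 0)" "dt f s t x = D (0, 1, 0)" "grad f s t x $ i = D (0, 0, axis i 1)"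
proof -
  show s: "((\<lambda>\<sigma>. f \<sigma> t x) has_real_derivative D (1, 0, 0)) (at s)"
    using has_real_derivative_along_line[of "unc f" D "(0, t, x)" s "(1, 0, 0)"] assms by simp
  show t: "((\<lambda>\<tau>. f s \<tau> x) has_real_derivative D (0, 1, 0)) (at t)"
    using has_real_derivative_along_line[of "unc f" D "(s, 0, x)" t "(0, 1, 0)"] assms by simp
  show x: "((\<lambda>h. f s t (x + h *\<^sub>R axis i 1)) has_real_derivative D (0, 0, axis i 1)) (at 0)"
    using has_real_derivative_along_line[of "unc f" D "(s, t, x)" 0 "(0, 0, axis i 1)"] assms by simp
  show "ds f s t x = D (1, 0, 0)" unfolding ds_def by (rule DERIV_imp_deriv[OF s])
  show "dt f s t x = D (0, 1, 0)" unfolding dt_def by (rule DERIV_imp_deriv[OF t])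
  show "grad f s t x $ i = D (0, 0, axis i 1)" unfolding grad_def using DERIV_imp_deriv[OF x] by simp
qed

lemma C1_on_IntDom_has_partials:
  fixes f :: "real \<Rightarrow> real \<Rightarrow> real^'n \<Rightarrow> real"
  assumes "C1_on IntDom (unc f)" "(s, t, x) \<in> IntDom"
  shows "((\<lambda>\<sigma>. f \<sigma> t x) has_real_derivative ds f s t x) (at s)"
    and "((\<lambda>\<tau>. f s \<tau> x) has_real_derivative dt f s t x) (at t)"
    and "((\<lambda>h. f s t (x + h *\<^sub>R axis i 1)) has_real_derivative grad f s t x $ i) (at 0)"
proof -
  obtain D where "(unc f has_derivative blinfun_apply D) (at (s, t, x))"
    using C1_on_open_has_derivative[OF assms(1) open_IntDom] assms(2) by metis
  from partials_eq_blinfun[OF this] show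
    "((\<lambda>\<sigma>. f \<sigma> t x) has_real_derivative ds f s t x) (at s)"
    "((\<lambda>\<tau>. f s \<tau> x) has_real_derivative dt f s t x) (at t)"
    "((\<lambda>h. f s t (x + h *\<^sub>R axis i 1)) has_real_derivative grad f s t x $ i) (at 0)"
    by simp_all
qed

lemma C1_on_IntDom_continuous_partials:
  fixes f :: "real \<Rightarrow> real \<Rightarrow> real^'n \<Rightarrow> real"
  assumes "C1_on IntDom (unc f)"
  shows "continuous_on IntDom (unc (ds f))" "continuous_on IntDom (unc (dt f))"
    and "continuous_on IntDom (unc (\<lambda>s t x. grad f s t x $ i))"
proof -
  obtain D where D: "\<And>p. p \<in> IntDom \<Longrightarrow> (unc f has_derivative blinfun_apply (D p)) (at p)"
    and cD: "continuous_on IntDom D"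
    using C1_on_open_has_derivative[OF assms open_IntDom] by blast
  have "continuous_on IntDom (\<lambda>p. D p w)" for w
    using cD by (intro continuous_intros)
  moreover have "unc (ds f) p = D p (1, 0, 0) \<and> unc (dt f) p = D p (0, 1, 0) \<and>
      unc (\<lambda>s t x. grad f s t x $ i) p = D p (0, 0, axis i 1)" if "p \<in> IntDom" for p
  proof -
    obtain s t x where "p = (s, t, x)" by (cases p)
    then show ?thesis using partials_eq_blinfun(4-6)[of f "D p" s t x] D[OF that] by simp
  qed
  ultimately show "continuous_on IntDom (unc (ds f))" "continuous_on IntDom (unc (dt f))"
    "continuous_on IntDom (unc (\<lambda>s t x. grad f s t x $ i))"
    by (auto cong: continuous_on_cong)
qed

lemma partials_add_scaleR:
  fixes f g :: "real \<Rightarrow> real \<Rightarrow> real^'n \<Rightarrow> real"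
  assumes f: "C1_on IntDom (unc f)" and g: "C1_on IntDom (unc g)" and p: "(s, t, x) \<in> IntDom"
  shows "ds (\<lambda>s t x. f s t x + c * g s t x) s t x = ds f s t x + c * ds g s t x"
    and "dt (\<lambda>s t x. f s t x + c * g s t x) s t x = dt f s t x + c * dt g s t x"
    and "grad (\<lambda>s t x. f s t x + c * g s t x) s t x $ i = grad f s t x $ i + c * grad g s t x $ i"
proof -
  note Df = C1_on_IntDom_has_partials[OF f p] and Dg = C1_on_IntDom_has_partials[OF g p]
  show "ds (\<lambda>s t x. f s t x + c * g s t x) s t x = ds f s t x + c * ds g s t x"
    unfolding ds_def[of "\<lambda>s t x. f s t x + c * g s t x"]
    by (rule DERIV_imp_deriv[OF DERIV_add[OF Df(1) DERIV_cmult[OF Dg(1)]]])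
  show "dt (\<lambda>s t x. f s t x + c * g s t x) s t x = dt f s t x + c * dt g s t x"
    unfolding dt_def[of "\<lambda>s t x. f s t x + c * g s t x"]
    by (rule DERIV_imp_deriv[OF DERIV_add[OF Df(2) DERIV_cmult[OF Dg(2)]]])
  show "grad (\<lambda>s t x. f s t x + c * g s t x) s t x $ i = grad f s t x $ i + c * grad g s t x $ i"
    using DERIV_imp_deriv[OF DERIV_add[OF Df(3)[of i] DERIV_cmult[OF Dg(3)[of i]]]]
    by (simp add: grad_def[of "\<lambda>s t x. f s t x + c * g s t x"])
qed

lemma partials_mult:
  fixes f g :: "real \<Rightarrow> real \<Rightarrow> real^'n \<Rightarrow> real"
  assumes f: "C1_on IntDom (unc f)" and g: "C1_on IntDom (unc g)" and p: "(s, t, x) \<in> IntDom"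
  shows "ds (\<lambda>s t x. f s t x * g s t x) s t x = ds f s t x * g s t x + f s t x * ds g s t x"
    and "dt (\<lambda>s t x. f s t x * g s t x) s t x = dt f s t x * g s t x + f s t x * dt g s t x"
    and "grad (\<lambda>s t x. f s t x * g s t x) s t x $ i
           = grad f s t x $ i * g s t x + f s t x * grad g s t x $ i"
proof -
  note Df = C1_on_IntDom_has_partials[OF f p] and Dg = C1_on_IntDom_has_partials[OF g p]
  show "ds (\<lambda>s t x. f s t x * g s t x) s t x = ds f s t x * g s t x + f s t x * ds g s t x"
    unfolding ds_def[of "\<lambda>s t x. f s t x * g s t x"]
    using DERIV_imp_deriv[OF DERIV_mult[OF Df(1) Dg(1)]] by (simp add: mult.commute)
  show "dt (\<lambda>s t x. f s t x * g s t x) s t x = dt f s t x * g s t x + f s t x * dt g s t x"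
    unfolding dt_def[of "\<lambda>s t x. f s t x * g s t x"]
    using DERIV_imp_deriv[OF DERIV_mult[OF Df(2) Dg(2)]] by (simp add: mult.commute)
  show "grad (\<lambda>s t x. f s t x * g s t x) s t x $ i
      = grad f s t x $ i * g s t x + f s t x * grad g s t x $ i"
    using DERIV_imp_deriv[OF DERIV_mult[OF Df(3)[of i] Dg(3)[of i]]]
    by (simp add: grad_def[of "\<lambda>s t x. f s t x * g s t x"] mult.commute)
qed

lemma pert_0 [simp]: "pert f 0 g = f"
  by (simp add: pert_def)

lemma partials_pert:
  fixes f g :: "real \<Rightarrow> real \<Rightarrow> real^'n \<Rightarrow> real"
  assumes "C1_on IntDom (unc f)" "C1_on IntDom (unc g)" "(s, t, x) \<in> IntDom"
  shows "ds (pert f \<epsilon> g) s t x = ds f s t x + \<epsilon> * ds g s t x"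
    and "dt (pert f \<epsilon> g) s t x = dt f s t x + \<epsilon> * dt g s t x"
  using partials_add_scaleR(1,2)[OF assms, of \<epsilon>] by (simp_all add: pert_def)

lemma divg_eq_sum_grad: "divg w s t x = (\<Sum>i\<in>UNIV. grad (\<lambda>s t x. w s t x $ i) s t x $ i)"
  by (simp add: divg_def grad_def)

lemma divg_add_scaleR:
  fixes u w :: "real \<Rightarrow> real \<Rightarrow> real^'n \<Rightarrow> real^'n"
  assumes "C1_on IntDom (unc u)" "C1_on IntDom (unc w)" "(s, t, x) \<in> IntDom"
  shows "divg (\<lambda>s t x. u s t x + c *\<^sub>R w s t x) s t x = divg u s t x + c * divg w s t x"
  using partials_add_scaleR(3)[OF C1_on_unc_component[OF assms(1)] C1_on_unc_component[OF assms(2)] assms(3)]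
  by (simp add: divg_eq_sum_grad sum.distrib sum_distrib_left)

lemma C1_on_IntDom_continuous_divg:
  assumes "C1_on IntDom (unc w)"
  shows "continuous_on IntDom (unc (divg w))"
proof -
  have "unc (divg w) = (\<lambda>p. \<Sum>i\<in>UNIV. unc (\<lambda>s t x. grad (\<lambda>s t x. w s t x $ i) s t x $ i) p)"
    by (simp add: unc_eq divg_eq_sum_grad)
  then show ?thesis
    using C1_on_IntDom_continuous_partials(3)[OF C1_on_unc_component[OF assms]]
    by (simp add: continuous_on_sum)
qed

lemma continuous_on_IntDom_slice:
  assumes "continuous_on IntDom (unc F)" "s \<in> {0<..<1}" "t \<in> {0<..<1}"
  shows "continuous_on UNIV (F s t)"
proof -
  have "continuous_on UNIV (\<lambda>x. unc F (s, t, x))"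
    by (rule continuous_on_compose2[OF assms(1)]) (use assms(2,3) in \<open>auto intro!: continuous_intros\<close>)
  then show ?thesis by simp
qed

lemma has_real_derivative_outside_support:
  fixes F :: "'a::topological_space \<Rightarrow> real"
  assumes "closed K" "\<And>y. y \<notin> K \<Longrightarrow> F y = 0" "isCont \<gamma> a" "\<gamma> a \<notin> K"
  shows "((\<lambda>h. F (\<gamma> h)) has_real_derivative 0) (at a)"
proof -
  have "eventually (\<lambda>h. \<gamma> h \<in> - K) (at a)"
    using assms(1,3,4) by (intro topological_tendstoD[OF assms(3)[unfolded isCont_def]]) auto
  then have "eventually (\<lambda>h. F (\<gamma> h) = 0) (nhds a)"
    unfolding eventually_nhds_conv_at using assms(2,4) by (auto elim: eventually_mono)
  then show ?thesis by (subst DERIV_cong_ev[OF refl _ refl]) auto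
qed

lemma partials_eq_0_outside_support:
  fixes f :: "real \<Rightarrow> real \<Rightarrow> real^'n \<Rightarrow> real"
  assumes "closed K" "\<And>p. p \<notin> K \<Longrightarrow> unc f p = 0" "(s, t, x) \<notin> K"
  shows "ds f s t x = 0" "dt f s t x = 0" "grad f s t x = 0"
proof -
  have "((\<lambda>\<sigma>. unc f (\<sigma>, t, x)) has_real_derivative 0) (at s)"
    "((\<lambda>\<tau>. unc f (s, \<tau>, x)) has_real_derivative 0) (at t)"
    "((\<lambda>h. unc f (s, t, x + h *\<^sub>R axis i 1)) has_real_derivative 0) (at 0)" for i
    using has_real_derivative_outside_support[where F="unc f" and \<gamma>="\<lambda>\<sigma>. (\<sigma>, t, x)" and a=s]
      has_real_derivative_outside_support[where F="unc f" and \<gamma>="\<lambda>\<tau>. (s, \<tau>, x)" and a=t]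
      has_real_derivative_outside_support[where F="unc f" and \<gamma>="\<lambda>h. (s, t, x + h *\<^sub>R axis i 1)" and a=0]
      assms by (auto intro!: continuous_intros)
  then show "ds f s t x = 0" "dt f s t x = 0" "grad f s t x = 0"
    unfolding ds_def dt_def grad_def by (auto simp: vec_eq_iff dest: DERIV_imp_deriv)
qed

lemma divg_eq_0_outside_support:
  assumes "closed K" "\<And>p. p \<notin> K \<Longrightarrow> unc w p = 0" "(s, t, x) \<notin> K"
  shows "divg w s t x = 0"
  unfolding divg_eq_sum_grad
  using partials_eq_0_outside_support(3)[of K "\<lambda>s t x. w s t x $ i" s t x for i] assms
  by (simp add: unc_eq)

lemma compact_slice_support:
  fixes K :: "(real \<times> real \<times> 'x::topological_space) set"
  assumes "compact K"
  obtains C where "compact C" "\<And>x. x \<notin> C \<Longrightarrow> (s, t, x) \<notin> K"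
proof
  show "compact ((\<lambda>p. snd (snd p)) ` K)"
    by (intro compact_continuous_image assms continuous_intros)
  show "(s, t, x) \<notin> K" if "x \<notin> (\<lambda>p. snd (snd p)) ` K" for x
    using that by force
qed

lemma continuous_on_extend_by_zero:
  assumes "continuous_on U f" "open U" "closed K" "K \<subseteq> U" "\<And>x. x \<notin> K \<Longrightarrow> f x = 0"
  shows "continuous_on UNIV f"
proof -
  have "continuous_on (- K) f"
    using assms(5) by (subst continuous_on_cong[OF refl, of _ _ "\<lambda>_. 0"]) auto
  then have "continuous_on (U \<union> - K) f"
    using assms by (intro continuous_on_open_Un) auto
  moreover have "U \<union> - K = UNIV" using assms(4) by auto
  ultimately show ?thesis by simp
qed

section \<open>Integrals of derivatives\<close>

lemma integrable_continuous_compact_support: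
  fixes f :: "'a::euclidean_space \<Rightarrow> real"
  assumes "continuous_on UNIV f" "compact C" "\<And>x. x \<notin> C \<Longrightarrow> f x = 0"
  shows "integrable lborel f"
proof -
  have "integrable lborel (\<lambda>x. indicator C x *\<^sub>R f x)"
    by (rule borel_integrable_compact[OF assms(2) continuous_on_subset[OF assms(1)]]) simp
  moreover have "(\<lambda>x. indicator C x *\<^sub>R f x) = f"
    using assms(3) by (force simp: indicator_def)
  ultimately show ?thesis by simp
qed

lemma lborel_integral_translate:
  fixes g :: "'a::euclidean_space \<Rightarrow> real"
  assumes "integrable lborel g"
  shows "integrable lborel (\<lambda>x. g (x + c))"
    and "integral\<^sup>L lborel (\<lambda>x. g (x + c)) = integral\<^sup>L lborel g"
proof -
  have g: "g \<in> borel_measurable borel"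
    using borel_measurable_integrable[OF assms] by simp
  have "integrable (distr lborel borel ((+) c)) g"
    using assms by (simp add: lborel_distr_plus)
  then show "integrable lborel (\<lambda>x. g (x + c))"
    by (subst (asm) integrable_distr_eq) (auto simp: g add.commute)
  have "integral\<^sup>L lborel g = integral\<^sup>L (distr lborel borel ((+) c)) g"
    by (simp add: lborel_distr_plus)
  also have "\<dots> = integral\<^sup>L lborel (\<lambda>x. g (x + c))"
    by (subst integral_distr) (auto simp: g add.commute)
  finally show "integral\<^sup>L lborel (\<lambda>x. g (x + c)) = integral\<^sup>L lborel g" ..
qed

lemma abs_line_difference_le:
  fixes g g' :: "'a::real_normed_vector \<Rightarrow> real"
  assumes D: "\<And>y. ((\<lambda>h. g (y + h *\<^sub>R e)) has_real_derivative g' y) (at 0)"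
    and B: "\<And>y. \<bar>g' y\<bar> \<le> B" and h: "0 < h"
  shows "\<bar>g (x + h *\<^sub>R e) - g x\<bar> \<le> B * h"
proof -
  have "((\<lambda>u. g (x + u *\<^sub>R e)) has_real_derivative g' (x + u *\<^sub>R e)) (at u)" for u
    using D[of "x + u *\<^sub>R e"] DERIV_shift[of "\<lambda>v. g (x + v *\<^sub>R e)" _ 0 u]
    by (simp add: algebra_simps scaleR_add_left)
  then obtain z where "g (x + h *\<^sub>R e) - g (x + 0 *\<^sub>R e) = (h - 0) * g' (x + z *\<^sub>R e)"
    using MVT2[OF h, of "\<lambda>u. g (x + u *\<^sub>R e)" "\<lambda>u. g' (x + u *\<^sub>R e)"] by blast
  then show ?thesis
    using B[of "x + z *\<^sub>R e"] h by (simp add: abs_mult mult.commute mult_left_mono)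
qed

lemma integral_eq_0_dominated_limit:
  fixes f :: "'a \<Rightarrow> real"
  assumes "f \<in> borel_measurable M" "\<And>n. Q n \<in> borel_measurable M" "integrable M w"
    and "\<And>x. (\<lambda>n. Q n x) \<longlonglongrightarrow> f x" "\<And>n x. \<bar>Q n x\<bar> \<le> w x" "\<And>n. integral\<^sup>L M (Q n) = 0"
  shows "integrable M f" "integral\<^sup>L M f = 0"
proof -
  show "integrable M f"
    by (rule integrable_dominated_convergence[where s=Q, OF assms(1-3)]) (use assms(4,5) in auto)
  have "(\<lambda>n. integral\<^sup>L M (Q n)) \<longlonglongrightarrow> integral\<^sup>L M f"
    by (rule integral_dominated_convergence[where s=Q, OF assms(1-3)]) (use assms(4,5) in auto)
  then show "integral\<^sup>L M f = 0"
    using assms(6) by (simp add: LIMSEQ_const_iff)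
qed

lemma bounded_compact_support:
  fixes f :: "'a::topological_space \<Rightarrow> real"
  assumes "continuous_on UNIV f" "compact S" "\<And>x. x \<notin> S \<Longrightarrow> f x = 0"
  obtains B where "\<And>x. \<bar>f x\<bar> \<le> B"
proof -
  have "bounded (f ` S)"
    using assms(1,2) by (meson compact_continuous_image compact_imp_bounded continuous_on_subset subset_UNIV)
  then obtain B where "\<And>x. x \<in> S \<Longrightarrow> \<bar>f x\<bar> \<le> B"
    unfolding bounded_iff by auto
  then show ?thesis
    using that[of "max B 0"] assms(3) by (metis abs_zero max.cobounded2 max.coboundedI1)
qed

lemma vanishes_on_line_outside_thickening:
  fixes g :: "'a::real_normed_vector \<Rightarrow> real"
  assumes "\<And>y. y \<notin> S \<Longrightarrow> g y = 0" "x \<notin> {y + z | y z. y \<in> S \<and> z \<in> cball 0 (norm e)}" "\<bar>h\<bar> \<le> 1"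
  shows "g (x + h *\<^sub>R e) = 0"
proof -
  have "x + h *\<^sub>R e \<notin> S"
  proof
    assume "x + h *\<^sub>R e \<in> S"
    moreover have "- (h *\<^sub>R e) \<in> cball 0 (norm e)"
      using assms(3) by (simp add: mult_left_le_one_le)
    ultimately have "x \<in> {y + z | y z. y \<in> S \<and> z \<in> cball 0 (norm e)}"
      unfolding mem_Collect_eq by (intro exI[of _ "x + h *\<^sub>R e"] exI[of _ "- (h *\<^sub>R e)"]) simp
    with assms(2) show False by contradiction
  qed
  then show ?thesis using assms(1) by simp
qed

text \<open>Dominated convergence for the difference quotients, whose integrals vanish by translation
  invariance of Lebesgue measure.\<close>

lemma integral_line_derivative_eq_0:
  fixes g g' :: "'a::euclidean_space \<Rightarrow> real"
  assumes D: "\<And>x. ((\<lambda>h. g (x + h *\<^sub>R e)) has_real_derivative g' x) (at 0)"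
    and cg: "continuous_on UNIV g" and cg': "continuous_on UNIV g'"
    and S: "compact S" "\<And>x. x \<notin> S \<Longrightarrow> g x = 0"
  shows "integrable lborel g'" "integral\<^sup>L lborel g' = 0"
proof -
  have g'_S: "g' x = 0" if "x \<notin> S" for x
    using DERIV_unique[OF D has_real_derivative_outside_support[where F=g and \<gamma>="\<lambda>h. x + h *\<^sub>R e" and a=0]]
      S that compact_imp_closed by (auto intro!: continuous_intros)
  obtain B where B: "\<And>x. \<bar>g' x\<bar> \<le> B"
    using bounded_compact_support[OF cg' S(1) g'_S] by blast
  define S2 where "S2 = {x + y | x y. x \<in> S \<and> y \<in> cball 0 (norm e)}"
  have S2: "compact S2"
    unfolding S2_def by (intro compact_sums S(1) compact_cball)
  define hn where "hn n = 1 / real (Suc n)" for n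
  have hn: "0 < hn n" "hn n \<le> 1" for n
    unfolding hn_def by (auto simp: field_simps)
  define Q where "Q n x = (g (x + hn n *\<^sub>R e) - g x) / hn n" for n x
  have vanish: "g (x + h *\<^sub>R e) = 0" if "x \<notin> S2" "\<bar>h\<bar> \<le> 1" for x h
    using vanishes_on_line_outside_thickening[where g=g and S=S and e=e, OF S(2)] that
    unfolding S2_def by blast
  have Q_S2: "Q n x = 0" if "x \<notin> S2" for n x
    using vanish[OF that, of 0] vanish[OF that, of "hn n"] hn[of n] by (simp add: Q_def)
  have Q_bound: "\<bar>Q n x\<bar> \<le> B * indicator S2 x" for n x
    using abs_line_difference_le[OF D B hn(1), of x n] hn[of n] Q_S2[of x n]
    by (cases "x \<in> S2") (simp_all add: Q_def divide_le_eq)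
  have g: "integrable lborel g"
    by (rule integrable_continuous_compact_support[OF cg S])
  have Q_int: "integrable lborel (Q n)" "integral\<^sup>L lborel (Q n) = 0" for n
    unfolding Q_def using g lborel_integral_translate[OF g] by simp_all
  have "hn \<longlonglongrightarrow> 0"
    unfolding hn_def by (rule LIMSEQ_Suc[OF lim_inverse_n'])
  then have "filterlim hn (at 0) sequentially"
    using hn(1) by (auto simp: filterlim_at less_imp_neq[symmetric])
  moreover have "((\<lambda>h. (g (x + h *\<^sub>R e) - g x) / h) \<longlongrightarrow> g' x) (at 0)" for x
    using D[of x] unfolding DERIV_def by simp
  ultimately have Q_lim: "(\<lambda>n. Q n x) \<longlonglongrightarrow> g' x" for x
    unfolding Q_def by (rule filterlim_compose[rotated])
  have dom: "integrable lborel (\<lambda>x. B * indicator S2 x)"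
    using S2 emeasure_compact_finite[OF S2] borel_compact[OF S2]
    by (intro integrable_mult_right integrable_real_indicator) (auto simp: less_top)
  have meas: "g' \<in> borel_measurable lborel" "Q n \<in> borel_measurable lborel" for n
    using borel_measurable_integrable[OF Q_int(1)] cg' by (auto intro: borel_measurable_continuous_onI)
  show "integrable lborel g'" "integral\<^sup>L lborel g' = 0"
    using integral_eq_0_dominated_limit[OF meas dom Q_lim Q_bound Q_int(2)] by simp_all
qed

lemma integral_mult_divg_by_parts:
  fixes \<Phi> :: "real \<Rightarrow> real \<Rightarrow> real^'n \<Rightarrow> real" and J :: "real \<Rightarrow> real \<Rightarrow> real^'n \<Rightarrow> real^'n"
  assumes \<Phi>: "C1_on IntDom (unc \<Phi>)" and J: "C1_on IntDom (unc J)"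
    and st: "s \<in> {0<..<1}" "t \<in> {0<..<1}"
    and K: "compact K" "\<And>p. p \<notin> K \<Longrightarrow> unc J p = 0"
  shows "integrable lborel (\<lambda>x. \<Phi> s t x * divg J s t x + grad \<Phi> s t x \<bullet> J s t x)"
    and "(LINT x|lborel. \<Phi> s t x * divg J s t x + grad \<Phi> s t x \<bullet> J s t x) = 0"
proof -
  define g where "g i = (\<lambda>s t x. \<Phi> s t x * J s t x $ i)" for i
  have g: "C1_on IntDom (unc (g i))" for i
    unfolding g_def by (intro C1_on_unc_mult \<Phi> C1_on_unc_component J)
  obtain C where C: "compact C" "\<And>x. x \<notin> C \<Longrightarrow> (s, t, x) \<notin> K"
    using compact_slice_support[OF K(1)] by metis
  have parts: "integrable lborel (\<lambda>x. grad (g i) s t x $ i) \<and>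
      (LINT x|lborel. grad (g i) s t x $ i) = 0" for i
  proof -
    have "((\<lambda>h. g i s t (x + h *\<^sub>R axis i 1)) has_real_derivative grad (g i) s t x $ i) (at 0)" for x
      using C1_on_IntDom_has_partials(3)[OF g] st by simp
    moreover have "g i s t x = 0" if "x \<notin> C" for x
      using K(2)[OF C(2)[OF that]] by (simp add: g_def)
    ultimately show ?thesis
      using integral_line_derivative_eq_0[where g="g i s t", OF _
          continuous_on_IntDom_slice[OF C1_on_imp_continuous_on[OF g] st]
          continuous_on_IntDom_slice[OF C1_on_IntDom_continuous_partials(3)[OF g] st] C(1)]
      by blast
  qed
  have "\<Phi> s t x * divg J s t x + grad \<Phi> s t x \<bullet> J s t x = (\<Sum>i\<in>UNIV. grad (g i) s t x $ i)" for x
    using partials_mult(3)[OF \<Phi> C1_on_unc_component[OF J], of s t x] st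
    unfolding g_def divg_eq_sum_grad inner_vec_def
    by (simp add: sum.distrib sum_distrib_left algebra_simps)
  then show "integrable lborel (\<lambda>x. \<Phi> s t x * divg J s t x + grad \<Phi> s t x \<bullet> J s t x)"
    and "(LINT x|lborel. \<Phi> s t x * divg J s t x + grad \<Phi> s t x \<bullet> J s t x) = 0"
    using parts by simp_all
qed

lemma param_line_has_real_derivative:
  fixes F F' :: "real \<Rightarrow> real \<Rightarrow> real^'n \<Rightarrow> real"
  assumes K: "closed K" "K \<subseteq> IntDom" "\<And>p. p \<notin> K \<Longrightarrow> unc F p = 0" "\<And>p. p \<notin> K \<Longrightarrow> unc F' p = 0"
    and D: "\<And>s t x. (s, t, x) \<in> IntDom \<Longrightarrow>
      ((\<lambda>h. F (s + h * a) (t + h * b) x) has_real_derivative F' s t x) (at 0)"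
  shows "((\<lambda>h. F (s + h * a) (t + h * b) x) has_real_derivative F' s t x) (at 0)"
proof (cases "(s, t, x) \<in> IntDom")
  case True
  then show ?thesis by (rule D)
next
  case False
  then have notK: "(s, t, x) \<notin> K"
    using K(2) by blast
  have "((\<lambda>h. unc F (s + h * a, t + h * b, x)) has_real_derivative 0) (at 0)"
    using has_real_derivative_outside_support[where F="unc F" and a=0
        and \<gamma>="\<lambda>h. (s + h * a, t + h * b, x)", OF K(1,3)] notK
    by (simp add: continuous_intros)
  then show ?thesis
    using K(4)[OF notK] by simp
qed

lemma integral_param_derivative_eq_0:
  fixes F F' :: "real \<Rightarrow> real \<Rightarrow> real^'n \<Rightarrow> real"
  assumes F: "C1_on IntDom (unc F)" and F': "continuous_on IntDom (unc F')"
    and K: "compact K" "K \<subseteq> IntDom" "\<And>p. p \<notin> K \<Longrightarrow> unc F p = 0" "\<And>p. p \<notin> K \<Longrightarrow> unc F' p = 0"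
    and D: "\<And>s t x. (s, t, x) \<in> IntDom \<Longrightarrow>
      ((\<lambda>h. F (s + h * a) (t + h * b) x) has_real_derivative F' s t x) (at 0)"
  shows "integrable lborel (\<lambda>((s, t), x). F' s t x)"
    and "(LINT z|lborel. (\<lambda>((s, t), x). F' s t x) z) = 0"
proof -
  define assoc :: "(real \<times> real) \<times> (real^'n) \<Rightarrow> real \<times> real \<times> (real^'n)"
    where "assoc z = (fst (fst z), snd (fst z), snd z)" for z
  have uncurry: "(\<lambda>((s, t), x). G s t x) = (\<lambda>z. unc G (assoc z))" for G :: "real \<Rightarrow> real \<Rightarrow> real^'n \<Rightarrow> real"
    by (simp add: fun_eq_iff assoc_def)
  have "continuous_on UNIV (unc F)" "continuous_on UNIV (unc F')"
    by (rule continuous_on_extend_by_zero[OF C1_on_imp_continuous_on[OF F] open_IntDom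
          compact_imp_closed[OF K(1)] K(2)], use K(3) in blast)
       (rule continuous_on_extend_by_zero[OF F' open_IntDom compact_imp_closed[OF K(1)] K(2)],
          use K(4) in blast)
  moreover have "continuous_on UNIV assoc"
    unfolding assoc_def by (intro continuous_intros)
  ultimately have cont: "continuous_on UNIV (\<lambda>z. unc F (assoc z))" "continuous_on UNIV (\<lambda>z. unc F' (assoc z))"
    by (auto intro: continuous_on_compose2)
  define S where "S = (\<lambda>p. ((fst p, fst (snd p)), snd (snd p))) ` K"
  have S: "compact S"
    unfolding S_def by (intro compact_continuous_image K(1) continuous_intros)
  have supp: "unc F (assoc z) = 0" if "z \<notin> S" for z
    using that K(3) unfolding S_def assoc_def by force
  have "((\<lambda>h. unc F (assoc (z + h *\<^sub>R ((a, b), 0)))) has_real_derivative unc F' (assoc z)) (at 0)" for z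
    using param_line_has_real_derivative[OF compact_imp_closed[OF K(1)] K(2-4) D,
        of "fst (fst z)" "snd (fst z)" "snd z"]
    by (simp add: assoc_def)
  note parts = integral_line_derivative_eq_0[OF this cont S supp]
  show "integrable lborel (\<lambda>((s, t), x). F' s t x)"
    unfolding uncurry using parts(1) by simp
  show "(LINT z|lborel. (\<lambda>((s, t), x). F' s t x) z) = 0"
    unfolding uncurry using parts(2) by simp
qed

lemma integral_ds_plus_dt_eq_0:
  fixes F G :: "real \<Rightarrow> real \<Rightarrow> real^'n \<Rightarrow> real"
  assumes F: "C1_on IntDom (unc F)" and G: "C1_on IntDom (unc G)"
    and K: "compact K" "K \<subseteq> IntDom" "\<And>p. p \<notin> K \<Longrightarrow> unc F p = 0" "\<And>p. p \<notin> K \<Longrightarrow> unc G p = 0"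
  shows "integrable lborel (\<lambda>((s, t), x). ds F s t x + dt G s t x)"
    and "(LINT z|lborel. (\<lambda>((s, t), x). ds F s t x + dt G s t x) z) = 0"
proof -
  have zero: "unc (ds F) p = 0" "unc (dt G) p = 0" if "p \<notin> K" for p
    using partials_eq_0_outside_support(1)[OF compact_imp_closed[OF K(1)] K(3)]
      partials_eq_0_outside_support(2)[OF compact_imp_closed[OF K(1)] K(4)] that
    by (simp_all add: unc_eq)
  have ds_line: "((\<lambda>h. F (s + h * 1) (t + h * 0) x) has_real_derivative ds F s t x) (at 0)"
    and dt_line: "((\<lambda>h. G (s + h * 0) (t + h * 1) x) has_real_derivative dt G s t x) (at 0)"
    if "(s, t, x) \<in> IntDom" for s t x
    using C1_on_IntDom_has_partials(1)[OF F that] C1_on_IntDom_has_partials(2)[OF G that]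
      DERIV_shift[of "\<lambda>\<sigma>. F \<sigma> t x" _ 0 s] DERIV_shift[of "\<lambda>\<tau>. G s \<tau> x" _ 0 t]
    by (simp_all add: add.commute)
  note Is = integral_param_derivative_eq_0[OF F C1_on_IntDom_continuous_partials(1)[OF F] K(1-3)
      zero(1) ds_line]
    and It = integral_param_derivative_eq_0[OF G C1_on_IntDom_continuous_partials(2)[OF G] K(1,2,4)
      zero(2) dt_line]
  have "(\<lambda>((s, t), x). ds F s t x + dt G s t x)
      = (\<lambda>z. (\<lambda>((s, t), x). ds F s t x) z + (\<lambda>((s, t), x). dt G s t x) z)"
    by (simp add: fun_eq_iff split_beta)
  then show "integrable lborel (\<lambda>((s, t), x). ds F s t x + dt G s t x)"
    and "(LINT z|lborel. (\<lambda>((s, t), x). ds F s t x + dt G s t x) z) = 0"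
    using Is It by simp_all
qed

lemma set_integral_eq_0_Fubini:
  fixes H :: "'a::euclidean_space \<times> 'b::euclidean_space \<Rightarrow> real"
  assumes "integrable lborel H" "integral\<^sup>L lborel H = 0"
    and "\<And>y. y \<in> A \<Longrightarrow> f y = (LINT x|lborel. H (y, x))" "\<And>y x. y \<notin> A \<Longrightarrow> H (y, x) = 0"
  shows "set_integrable lborel A f" "(LINT y:A|lborel. f y) = 0"
proof -
  have eq: "(\<lambda>y. indicator A y *\<^sub>R f y) = (\<lambda>y. LINT x|lborel. H (y, x))"
    by (auto simp: indicator_def fun_eq_iff assms(3,4))
  have H: "integrable (lborel \<Otimes>\<^sub>M lborel) H"
    using assms(1) by (simp add: lborel_prod)
  show "set_integrable lborel A f"
    unfolding set_integrable_def eq by (rule lborel_pair.integrable_fst'[OF H])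
  show "(LINT y:A|lborel. f y) = 0"
    unfolding set_lebesgue_integral_def eq using lborel_pair.integral_fst'[OF H] assms(2)
    by (simp add: lborel_prod)
qed

section \<open>First variation of the multiplier terms\<close>

lemma divg_pert_flux:
  fixes \<rho> r :: "real \<Rightarrow> real \<Rightarrow> real^'n \<Rightarrow> real" and v a :: "real \<Rightarrow> real \<Rightarrow> real^'n \<Rightarrow> real^'n"
  assumes \<rho>: "C1_on IntDom (unc \<rho>)" and r: "C1_on IntDom (unc r)"
    and v: "C1_on IntDom (unc v)" and a: "C1_on IntDom (unc a)" and p: "(s, t, x) \<in> IntDom"
  shows "divg (\<lambda>s t x. pert \<rho> \<epsilon> r s t x *\<^sub>R pert v \<epsilon> a s t x) s t x
    = divg (\<lambda>s t x. \<rho> s t x *\<^sub>R v s t x) s t x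
      + \<epsilon> * (divg (\<lambda>s t x. r s t x *\<^sub>R v s t x + \<rho> s t x *\<^sub>R a s t x) s t x
        + \<epsilon> * divg (\<lambda>s t x. r s t x *\<^sub>R a s t x) s t x)"
proof -
  have \<rho>v: "C1_on IntDom (unc (\<lambda>s t x. \<rho> s t x *\<^sub>R v s t x))"
    by (rule C1_on_unc_scaleR[OF \<rho> v])
  have J: "C1_on IntDom (unc (\<lambda>s t x. r s t x *\<^sub>R v s t x + \<rho> s t x *\<^sub>R a s t x))"
    by (rule C1_on_unc_add[OF C1_on_unc_scaleR[OF r v] C1_on_unc_scaleR[OF \<rho> a]])
  have ra: "C1_on IntDom (unc (\<lambda>s t x. r s t x *\<^sub>R a s t x))"
    by (rule C1_on_unc_scaleR[OF r a])
  have "C1_on IntDom (unc (\<lambda>s t x. \<epsilon>))"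
    using C1_on_const by (simp add: unc_eq)
  note J_ra = C1_on_unc_add[OF J C1_on_unc_scaleR[OF this ra]]
  have eq: "(\<lambda>s t x. pert \<rho> \<epsilon> r s t x *\<^sub>R pert v \<epsilon> a s t x) = (\<lambda>s t x. \<rho> s t x *\<^sub>R v s t x
      + \<epsilon> *\<^sub>R ((r s t x *\<^sub>R v s t x + \<rho> s t x *\<^sub>R a s t x) + \<epsilon> *\<^sub>R (r s t x *\<^sub>R a s t x)))"
    by (simp add: fun_eq_iff pert_def algebra_simps)
  show ?thesis
    by (simp only: eq divg_add_scaleR[OF \<rho>v J_ra p] divg_add_scaleR[OF J ra p])
qed

definition lag_density_var ::
  "(real \<Rightarrow> real \<Rightarrow> real^'n \<Rightarrow> real) \<Rightarrow> (real \<Rightarrow> real \<Rightarrow> real^'n \<Rightarrow> real^'n) \<Rightarrow> (real \<Rightarrow> real \<Rightarrow> real^'n \<Rightarrow> real^'n)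
   \<Rightarrow> (real \<Rightarrow> real \<Rightarrow> real^'n \<Rightarrow> real) \<Rightarrow> (real \<Rightarrow> real \<Rightarrow> real^'n \<Rightarrow> real)
   \<Rightarrow> (real \<Rightarrow> real \<Rightarrow> real^'n \<Rightarrow> real) \<Rightarrow> (real \<Rightarrow> real \<Rightarrow> real^'n \<Rightarrow> real^'n) \<Rightarrow> (real \<Rightarrow> real \<Rightarrow> real^'n \<Rightarrow> real^'n)
   \<Rightarrow> real \<Rightarrow> real \<Rightarrow> real^'n \<Rightarrow> real" where
  "lag_density_var \<rho> vs vt \<Phi>s \<Phi>t r a b s t x =
     \<Phi>s s t x * (ds r s t x + divg (\<lambda>s t x. r s t x *\<^sub>R vs s t x + \<rho> s t x *\<^sub>R a s t x) s t x)
   + \<Phi>t s t x * (dt r s t x + divg (\<lambda>s t x. r s t x *\<^sub>R vt s t x + \<rho> s t x *\<^sub>R b s t x) s t x)"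

lemma flux_var_C1_support:
  fixes \<rho> r :: "real \<Rightarrow> real \<Rightarrow> real^'n \<Rightarrow> real" and v a :: "real \<Rightarrow> real \<Rightarrow> real^'n \<Rightarrow> real^'n"
  assumes "C1_on IntDom (unc \<rho>)" "C1_on IntDom (unc v)" "C1_on IntDom (unc r)" "C1_on IntDom (unc a)"
    and "\<And>p. p \<notin> K \<Longrightarrow> unc r p = 0" "\<And>p. p \<notin> K \<Longrightarrow> unc a p = 0"
  shows "C1_on IntDom (unc (\<lambda>s t x. r s t x *\<^sub>R v s t x + \<rho> s t x *\<^sub>R a s t x))"
    and "\<And>p. p \<notin> K \<Longrightarrow> unc (\<lambda>s t x. r s t x *\<^sub>R v s t x + \<rho> s t x *\<^sub>R a s t x) p = 0"
proof -
  show "C1_on IntDom (unc (\<lambda>s t x. r s t x *\<^sub>R v s t x + \<rho> s t x *\<^sub>R a s t x))"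
    by (intro C1_on_unc_add C1_on_unc_scaleR assms(1-4))
  show "unc (\<lambda>s t x. r s t x *\<^sub>R v s t x + \<rho> s t x *\<^sub>R a s t x) p = 0" if "p \<notin> K" for p
    using assms(5,6)[OF that] by (simp add: unc_eq)
qed

lemma has_real_derivative_lag_density_pert:
  fixes \<rho> r \<Phi>s \<Phi>t p q :: "real \<Rightarrow> real \<Rightarrow> real^'n \<Rightarrow> real"
    and vs vt a b :: "real \<Rightarrow> real \<Rightarrow> real^'n \<Rightarrow> real^'n"
  assumes C1: "C1_on IntDom (unc \<rho>)" "C1_on IntDom (unc vs)" "C1_on IntDom (unc vt)"
      "C1_on IntDom (unc r)" "C1_on IntDom (unc a)" "C1_on IntDom (unc b)"
    and st: "(s, t, x) \<in> IntDom"
    and cont_s: "ds \<rho> s t x + divg (\<lambda>s t x. \<rho> s t x *\<^sub>R vs s t x) s t x = 0"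
    and cont_t: "dt \<rho> s t x + divg (\<lambda>s t x. \<rho> s t x *\<^sub>R vt s t x) s t x = 0"
  shows "((\<lambda>\<epsilon>. lag_density (pert \<rho> \<epsilon> r) (pert vs \<epsilon> a) (pert vt \<epsilon> b) (pert \<Phi>s \<epsilon> p) (pert \<Phi>t \<epsilon> q) s t x)
    has_real_derivative lag_density_var \<rho> vs vt \<Phi>s \<Phi>t r a b s t x) (at 0)"
proof -
  define Ss where "Ss = ds r s t x + divg (\<lambda>s t x. r s t x *\<^sub>R vs s t x + \<rho> s t x *\<^sub>R a s t x) s t x"
  define St where "St = dt r s t x + divg (\<lambda>s t x. r s t x *\<^sub>R vt s t x + \<rho> s t x *\<^sub>R b s t x) s t x"
  \<comment> \<open>the zeroth-order terms are the continuity equations, so they drop out\<close>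
  have "lag_density (pert \<rho> \<epsilon> r) (pert vs \<epsilon> a) (pert vt \<epsilon> b) (pert \<Phi>s \<epsilon> p) (pert \<Phi>t \<epsilon> q) s t x
    = (\<Phi>s s t x + \<epsilon> * p s t x) * (\<epsilon> * Ss + \<epsilon>\<^sup>2 * divg (\<lambda>s t x. r s t x *\<^sub>R a s t x) s t x)
    + (\<Phi>t s t x + \<epsilon> * q s t x) * (\<epsilon> * St + \<epsilon>\<^sup>2 * divg (\<lambda>s t x. r s t x *\<^sub>R b s t x) s t x)" for \<epsilon>
    using eq_neg_iff_add_eq_0[THEN iffD2, OF cont_s] eq_neg_iff_add_eq_0[THEN iffD2, OF cont_t]
    unfolding lag_density_def partials_pert[OF C1(1,4) st] divg_pert_flux[OF C1(1,4,2,5) st]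
      divg_pert_flux[OF C1(1,4,3,6) st] Ss_def St_def
    by (simp add: pert_def algebra_simps power2_eq_square)
  then show ?thesis
    unfolding lag_density_var_def Ss_def[symmetric] St_def[symmetric]
    by (simp only:) (auto intro!: derivative_eq_intros)
qed

lemma integrable_lag_density_var:
  fixes \<rho> \<Phi>s \<Phi>t r :: "real \<Rightarrow> real \<Rightarrow> real^'n \<Rightarrow> real" and vs vt a b :: "real \<Rightarrow> real \<Rightarrow> real^'n \<Rightarrow> real^'n"
  assumes C1: "C1_on IntDom (unc \<rho>)" "C1_on IntDom (unc vs)" "C1_on IntDom (unc vt)"
      "C1_on IntDom (unc \<Phi>s)" "C1_on IntDom (unc \<Phi>t)"
      "C1_on IntDom (unc r)" "C1_on IntDom (unc a)" "C1_on IntDom (unc b)"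
    and K: "compact K" "\<And>p. p \<notin> K \<Longrightarrow> unc r p = 0" "\<And>p. p \<notin> K \<Longrightarrow> unc a p = 0"
      "\<And>p. p \<notin> K \<Longrightarrow> unc b p = 0"
    and st: "s \<in> {0<..<1}" "t \<in> {0<..<1}"
  shows "integrable lborel (lag_density_var \<rho> vs vt \<Phi>s \<Phi>t r a b s t)"
proof -
  note Js = flux_var_C1_support[where K=K, OF C1(1,2,6,7) K(2,3)]
    and Jt = flux_var_C1_support[where K=K, OF C1(1,3,6,8) K(2,4)]
  obtain C where C: "compact C" "\<And>x. x \<notin> C \<Longrightarrow> (s, t, x) \<notin> K"
    using compact_slice_support[OF K(1)] by metis
  note slice = continuous_on_IntDom_slice[OF _ st]
  show ?thesis
  proof (rule integrable_continuous_compact_support[OF _ C(1)])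
    show "continuous_on UNIV (lag_density_var \<rho> vs vt \<Phi>s \<Phi>t r a b s t)"
      unfolding lag_density_var_def
      by (intro continuous_intros slice C1_on_imp_continuous_on C1 C1_on_IntDom_continuous_partials
          C1_on_IntDom_continuous_divg Js(1) Jt(1))
    show "lag_density_var \<rho> vs vt \<Phi>s \<Phi>t r a b s t x = 0" if "x \<notin> C" for x
      using partials_eq_0_outside_support(1,2)[OF compact_imp_closed[OF K(1)] K(2) C(2)[OF that]]
        divg_eq_0_outside_support[OF compact_imp_closed[OF K(1)] Js(2) C(2)[OF that]]
        divg_eq_0_outside_support[OF compact_imp_closed[OF K(1)] Jt(2) C(2)[OF that]]
      by (simp add: lag_density_var_def)
  qed
qed

section \<open>First variation of the area\<close>

text \<open>The coefficient of the first power of \<open>\<epsilon>\<close> in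
  \<open>(v + \<epsilon> a) \<bullet> (w + \<epsilon> b) (\<rho> + \<epsilon> r)\<close>.\<close>

definition Gst_density_var ::
  "(real \<Rightarrow> real \<Rightarrow> real^'n \<Rightarrow> real) \<Rightarrow> (real \<Rightarrow> real \<Rightarrow> real^'n \<Rightarrow> real^'n) \<Rightarrow> (real \<Rightarrow> real \<Rightarrow> real^'n \<Rightarrow> real^'n)
   \<Rightarrow> (real \<Rightarrow> real \<Rightarrow> real^'n \<Rightarrow> real) \<Rightarrow> (real \<Rightarrow> real \<Rightarrow> real^'n \<Rightarrow> real^'n) \<Rightarrow> (real \<Rightarrow> real \<Rightarrow> real^'n \<Rightarrow> real^'n)
   \<Rightarrow> real \<Rightarrow> real \<Rightarrow> real^'n \<Rightarrow> real" where
  "Gst_density_var \<rho> v w r a b s t x =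
     (v s t x \<bullet> b s t x + a s t x \<bullet> w s t x) * \<rho> s t x + (v s t x \<bullet> w s t x) * r s t x"

definition Aarea_density_var ::
  "(real \<Rightarrow> real \<Rightarrow> real^'n \<Rightarrow> real) \<Rightarrow> (real \<Rightarrow> real \<Rightarrow> real^'n \<Rightarrow> real^'n) \<Rightarrow> (real \<Rightarrow> real \<Rightarrow> real^'n \<Rightarrow> real^'n)
   \<Rightarrow> (real \<Rightarrow> real \<Rightarrow> real^'n \<Rightarrow> real) \<Rightarrow> (real \<Rightarrow> real \<Rightarrow> real^'n \<Rightarrow> real^'n) \<Rightarrow> (real \<Rightarrow> real \<Rightarrow> real^'n \<Rightarrow> real^'n)
   \<Rightarrow> real \<Rightarrow> real \<Rightarrow> real^'n \<Rightarrow> real" where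
  "Aarea_density_var \<rho> vs vt r a b s t x =
     (Gst_density_var \<rho> vs vs r a a s t x * Gss \<rho> vt s t + Gss \<rho> vs s t * Gst_density_var \<rho> vt vt r b b s t x
      - 2 * Gst \<rho> vs vt s t * Gst_density_var \<rho> vs vt r a b s t x) / (2 * Aarea \<rho> vs vt s t)"

lemma Gss_eq_Gst: "Gss \<rho> v s t = Gst \<rho> v v s t"
  unfolding Gss_def Gst_def by (simp add: power2_norm_eq_inner)

lemma Gst_commute: "Gst \<rho> v w s t = Gst \<rho> w v s t"
  unfolding Gst_def by (simp add: inner_commute)

lemma integrable_inner_density:
  fixes \<rho> :: "'a::euclidean_space \<Rightarrow> real" and v w :: "'a \<Rightarrow> 'b::real_inner"
  assumes "continuous_on UNIV \<rho>" "continuous_on UNIV v" "continuous_on UNIV w" "\<And>x. 0 \<le> \<rho> x"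
    and "integrable lborel (\<lambda>x. (norm (v x))\<^sup>2 * \<rho> x)"
      "integrable lborel (\<lambda>x. (norm (w x))\<^sup>2 * \<rho> x)"
  shows "integrable lborel (\<lambda>x. (v x \<bullet> w x) * \<rho> x)"
proof (rule Bochner_Integration.integrable_bound[OF Bochner_Integration.integrable_add[OF assms(5,6)]])
  show "(\<lambda>x. (v x \<bullet> w x) * \<rho> x) \<in> borel_measurable lborel"
    using assms(1-3) by (auto intro!: borel_measurable_continuous_onI continuous_intros)
  have "\<bar>v x \<bullet> w x\<bar> * \<rho> x \<le> ((norm (v x))\<^sup>2 + (norm (w x))\<^sup>2) * \<rho> x" for x
  proof (rule mult_right_mono[OF _ assms(4)])
    have "\<bar>v x \<bullet> w x\<bar> \<le> norm (v x) * norm (w x)" by (rule Cauchy_Schwarz_ineq2)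
    also have "\<dots> \<le> (norm (v x))\<^sup>2 + (norm (w x))\<^sup>2"
      using sum_squares_bound[of "norm (v x)" "norm (w x)"]
        mult_nonneg_nonneg[OF norm_ge_zero norm_ge_zero, of "v x" "w x"] by linarith
    finally show "\<bar>v x \<bullet> w x\<bar> \<le> (norm (v x))\<^sup>2 + (norm (w x))\<^sup>2" .
  qed
  then show "AE x in lborel.
      norm ((v x \<bullet> w x) * \<rho> x) \<le> norm ((norm (v x))\<^sup>2 * \<rho> x + (norm (w x))\<^sup>2 * \<rho> x)"
    using assms(4) by (intro AE_I2) (simp add: abs_mult algebra_simps)
qed

lemma has_real_derivative_Gst_pert:
  fixes \<rho> r :: "real \<Rightarrow> real \<Rightarrow> real^'n \<Rightarrow> real" and v w a b :: "real \<Rightarrow> real \<Rightarrow> real^'n \<Rightarrow> real^'n"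
  assumes cont: "continuous_on UNIV (\<rho> s t)" "continuous_on UNIV (v s t)" "continuous_on UNIV (w s t)"
      "continuous_on UNIV (r s t)" "continuous_on UNIV (a s t)" "continuous_on UNIV (b s t)"
    and supp: "compact C" "\<And>x. x \<notin> C \<Longrightarrow> r s t x = 0" "\<And>x. x \<notin> C \<Longrightarrow> a s t x = 0"
      "\<And>x. x \<notin> C \<Longrightarrow> b s t x = 0"
    and int: "integrable lborel (\<lambda>x. (v s t x \<bullet> w s t x) * \<rho> s t x)"
  shows "integrable lborel (Gst_density_var \<rho> v w r a b s t)"
    and "((\<lambda>\<epsilon>. Gst (pert \<rho> \<epsilon> r) (pert v \<epsilon> a) (pert w \<epsilon> b) s t) has_real_derivative
          (LINT x|lborel. Gst_density_var \<rho> v w r a b s t x)) (at 0)"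
proof -
  define g1 where "g1 = Gst_density_var \<rho> v w r a b s t"
  define g2 where
    "g2 x = (a s t x \<bullet> b s t x) * \<rho> s t x + (v s t x \<bullet> b s t x + a s t x \<bullet> w s t x) * r s t x" for x
  define g3 where "g3 x = (a s t x \<bullet> b s t x) * r s t x" for x
  have int_supp: "integrable lborel f" if "continuous_on UNIV f" "\<And>x. x \<notin> C \<Longrightarrow> f x = 0"
    for f :: "real^'n \<Rightarrow> real"
    using integrable_continuous_compact_support[OF that(1) supp(1) that(2)] .
  have ints: "integrable lborel g1" "integrable lborel g2" "integrable lborel g3"
    unfolding g1_def Gst_density_var_def g2_def g3_def
    by (auto intro!: int_supp continuous_intros cont simp: supp(2-4))
  from ints(1) show "integrable lborel (Gst_density_var \<rho> v w r a b s t)"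
    unfolding g1_def .
  have expand: "Gst (pert \<rho> \<epsilon> r) (pert v \<epsilon> a) (pert w \<epsilon> b) s t
      = (LINT x|lborel. (v s t x \<bullet> w s t x) * \<rho> s t x) + \<epsilon> * integral\<^sup>L lborel g1
        + \<epsilon>\<^sup>2 * integral\<^sup>L lborel g2 + \<epsilon> ^ 3 * integral\<^sup>L lborel g3" for \<epsilon>
  proof -
    have "Gst (pert \<rho> \<epsilon> r) (pert v \<epsilon> a) (pert w \<epsilon> b) s t
      = (LINT x|lborel. (v s t x \<bullet> w s t x) * \<rho> s t x + \<epsilon> * g1 x + \<epsilon>\<^sup>2 * g2 x + \<epsilon> ^ 3 * g3 x)"
      unfolding Gst_def g1_def Gst_density_var_def g2_def g3_def pert_def
      by (simp add: inner_add_left inner_add_right algebra_simps power2_eq_square power3_eq_cube)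
    then show ?thesis
      using int ints by simp
  qed
  show "((\<lambda>\<epsilon>. Gst (pert \<rho> \<epsilon> r) (pert v \<epsilon> a) (pert w \<epsilon> b) s t) has_real_derivative
      (LINT x|lborel. Gst_density_var \<rho> v w r a b s t x)) (at 0)"
    unfolding expand g1_def[symmetric] by (auto intro!: derivative_eq_intros)
qed

lemma has_real_derivative_sqrt_gram:
  assumes "(g11 has_real_derivative d11) (at y)" "(g22 has_real_derivative d22) (at y)"
    and "(g12 has_real_derivative d12) (at y)" "0 < g11 y * g22 y - (g12 y)\<^sup>2"
  shows "((\<lambda>z. sqrt (g11 z * g22 z - (g12 z)\<^sup>2)) has_real_derivative
    (d11 * g22 y + g11 y * d22 - 2 * g12 y * d12) / (2 * sqrt (g11 y * g22 y - (g12 y)\<^sup>2))) (at y)"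
  using assms by (auto intro!: derivative_eq_intros simp: field_simps)

lemma has_real_derivative_Aarea_pert:
  fixes \<rho> r :: "real \<Rightarrow> real \<Rightarrow> real^'n \<Rightarrow> real" and vs vt a b :: "real \<Rightarrow> real \<Rightarrow> real^'n \<Rightarrow> real^'n"
  assumes cont: "continuous_on UNIV (\<rho> s t)" "continuous_on UNIV (vs s t)" "continuous_on UNIV (vt s t)"
      "continuous_on UNIV (r s t)" "continuous_on UNIV (a s t)" "continuous_on UNIV (b s t)"
    and supp: "compact C" "\<And>x. x \<notin> C \<Longrightarrow> r s t x = 0" "\<And>x. x \<notin> C \<Longrightarrow> a s t x = 0"
      "\<And>x. x \<notin> C \<Longrightarrow> b s t x = 0"
    and dens: "\<And>x. 0 \<le> \<rho> s t x"
    and energy: "integrable lborel (\<lambda>x. (norm (vs s t x))\<^sup>2 * \<rho> s t x)"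
      "integrable lborel (\<lambda>x. (norm (vt s t x))\<^sup>2 * \<rho> s t x)"
    and Apos: "0 < Aarea \<rho> vs vt s t"
  shows "integrable lborel (Aarea_density_var \<rho> vs vt r a b s t)"
    and "((\<lambda>\<epsilon>. Aarea (pert \<rho> \<epsilon> r) (pert vs \<epsilon> a) (pert vt \<epsilon> b) s t) has_real_derivative
          (LINT x|lborel. Aarea_density_var \<rho> vs vt r a b s t x)) (at 0)"
proof -
  have inner_self: "integrable lborel (\<lambda>x. (v s t x \<bullet> v s t x) * \<rho> s t x)"
    if "integrable lborel (\<lambda>x. (norm (v s t x))\<^sup>2 * \<rho> s t x)" for v :: "real \<Rightarrow> real \<Rightarrow> real^'n \<Rightarrow> real^'n"
    using that by (simp add: power2_norm_eq_inner)
  note ss = has_real_derivative_Gst_pert[where \<rho>=\<rho> and v=vs and w=vs and r=r and a=a and b=a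
      and s=s and t=t, OF cont(1,2,2,4,5,5) supp(1-3,3) inner_self[of vs, OF energy(1)]]
    and tt = has_real_derivative_Gst_pert[where \<rho>=\<rho> and v=vt and w=vt and r=r and a=b and b=b
      and s=s and t=t, OF cont(1,3,3,4,6,6) supp(1,2,4,4) inner_self[of vt, OF energy(2)]]
    and st = has_real_derivative_Gst_pert[where \<rho>=\<rho> and v=vs and w=vt and r=r and a=a and b=b
      and s=s and t=t, OF cont(1,2,3,4,5,6) supp
      integrable_inner_density[OF cont(1-3) dens energy]]
  have "0 < Gss \<rho> vs s t * Gss \<rho> vt s t - (Gst \<rho> vs vt s t)\<^sup>2"
    using Apos unfolding Aarea_def by simp
  from has_real_derivative_sqrt_gram[OF ss(2) tt(2) st(2)] this
  have "((\<lambda>\<epsilon>. Aarea (pert \<rho> \<epsilon> r) (pert vs \<epsilon> a) (pert vt \<epsilon> b) s t) has_real_derivative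
    ((LINT x|lborel. Gst_density_var \<rho> vs vs r a a s t x) * Gss \<rho> vt s t
      + Gss \<rho> vs s t * (LINT x|lborel. Gst_density_var \<rho> vt vt r b b s t x)
      - 2 * Gst \<rho> vs vt s t * (LINT x|lborel. Gst_density_var \<rho> vs vt r a b s t x))
     / (2 * Aarea \<rho> vs vt s t)) (at 0)"
    unfolding Aarea_def Gss_eq_Gst by simp
  moreover show "integrable lborel (Aarea_density_var \<rho> vs vt r a b s t)"
    unfolding Aarea_density_var_def using ss(1) tt(1) st(1) by simp
  ultimately show "((\<lambda>\<epsilon>. Aarea (pert \<rho> \<epsilon> r) (pert vs \<epsilon> a) (pert vt \<epsilon> b) s t) has_real_derivative
      (LINT x|lborel. Aarea_density_var \<rho> vs vt r a b s t x)) (at 0)"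
    unfolding Aarea_density_var_def using ss(1) tt(1) st(1)
    by (simp add: diff_divide_distrib add_divide_distrib)
qed

lemma hamilton_jacobi_cancellation:
  fixes vs vt a b gs gt :: "'v::real_inner"
  assumes gs: "gs = inverse A *\<^sub>R (m22 *\<^sub>R vs - m12 *\<^sub>R vt)"
    and gt: "gt = inverse A *\<^sub>R (m11 *\<^sub>R vt - m12 *\<^sub>R vs)"
    and HJ: "ps + pt
      + inverse A * (1/2 * (norm vs)\<^sup>2 * m22 + 1/2 * (norm vt)\<^sup>2 * m11 - (vt \<bullet> vs) * m12) = 0"
  shows "(((vs \<bullet> a + a \<bullet> vs) * R + (vs \<bullet> vs) * r) * m22 + m11 * ((vt \<bullet> b + b \<bullet> vt) * R + (vt \<bullet> vt) * r)
      - 2 * m12 * ((vs \<bullet> b + a \<bullet> vt) * R + (vs \<bullet> vt) * r)) / (2 * A)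
    - gs \<bullet> (r *\<^sub>R vs + R *\<^sub>R a) - gt \<bullet> (r *\<^sub>R vt + R *\<^sub>R b) = (ps + pt) * r"
proof -
  define d where "d = inverse A"
  have div: "X / (2 * A) = X * d / 2" for X
    by (cases "A = 0") (simp_all add: d_def field_simps)
  have comm: "a \<bullet> vs = vs \<bullet> a" "b \<bullet> vt = vt \<bullet> b" "a \<bullet> vt = vt \<bullet> a" "vt \<bullet> vs = vs \<bullet> vt"
    by (simp_all add: inner_commute)
  have e1: "gs \<bullet> (r *\<^sub>R vs + R *\<^sub>R a)
      = d * (m22 * (r * (vs \<bullet> vs) + R * (vs \<bullet> a)) - m12 * (r * (vs \<bullet> vt) + R * (vt \<bullet> a)))"
    unfolding gs d_def by (simp add: inner_add_right inner_diff_left comm algebra_simps)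
  have e2: "gt \<bullet> (r *\<^sub>R vt + R *\<^sub>R b)
      = d * (m11 * (r * (vt \<bullet> vt) + R * (vt \<bullet> b)) - m12 * (r * (vs \<bullet> vt) + R * (vs \<bullet> b)))"
    unfolding gt d_def by (simp add: inner_add_right inner_diff_left comm algebra_simps)
  have e3: "ps + pt = - d * (1/2 * (vs \<bullet> vs) * m22 + 1/2 * (vt \<bullet> vt) * m11 - (vs \<bullet> vt) * m12)"
    using HJ unfolding d_def by (simp add: power2_norm_eq_inner comm algebra_simps)
  show ?thesis
    unfolding div comm e1 e2 e3 by (simp add: field_simps)
qed

lemma test_funD:
  assumes "test_fun f"
  obtains K where "C1_on IntDom (unc f)" "compact K" "K \<subseteq> IntDom" "\<And>p. p \<notin> K \<Longrightarrow> unc f p = 0"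
  using assms C1_on_subset[of UNIV "unc f" IntDom] unfolding test_fun_def by blast

lemma test_funs_common_support:
  assumes "test_fun r" "test_fun a" "test_fun b"
  obtains K where "C1_on IntDom (unc r)" "C1_on IntDom (unc a)" "C1_on IntDom (unc b)"
    "compact K" "K \<subseteq> IntDom"
    "\<And>p. p \<notin> K \<Longrightarrow> unc r p = 0" "\<And>p. p \<notin> K \<Longrightarrow> unc a p = 0" "\<And>p. p \<notin> K \<Longrightarrow> unc b p = 0"
proof -
  obtain Kr Ka Kb where r: "C1_on IntDom (unc r)" "compact Kr" "Kr \<subseteq> IntDom" "\<And>p. p \<notin> Kr \<Longrightarrow> unc r p = 0"
    and a: "C1_on IntDom (unc a)" "compact Ka" "Ka \<subseteq> IntDom" "\<And>p. p \<notin> Ka \<Longrightarrow> unc a p = 0"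
    and b: "C1_on IntDom (unc b)" "compact Kb" "Kb \<subseteq> IntDom" "\<And>p. p \<notin> Kb \<Longrightarrow> unc b p = 0"
    using test_funD assms by metis
  show ?thesis
    by (rule that[of "Kr \<union> Ka \<union> Kb"]) (use r a b in auto)
qed

context
  fixes \<rho> \<Phi>s \<Phi>t :: "real \<Rightarrow> real \<Rightarrow> real^'n \<Rightarrow> real"
    and vs vt :: "real \<Rightarrow> real \<Rightarrow> real^'n \<Rightarrow> real^'n"
  assumes C1: "C1_on IntDom (unc \<rho>)" "C1_on IntDom (unc vs)" "C1_on IntDom (unc vt)"
      "C1_on IntDom (unc \<Phi>s)" "C1_on IntDom (unc \<Phi>t)"
    and dens: "\<And>s t x. s \<in> {0..1} \<Longrightarrow> t \<in> {0..1} \<Longrightarrow> \<rho> s t x \<ge> 0"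
    and energy: "\<And>s t. s \<in> {0..1} \<Longrightarrow> t \<in> {0..1} \<Longrightarrow> integrable lborel (\<lambda>x. (norm (vs s t x))\<^sup>2 * \<rho> s t x)"
      "\<And>s t. s \<in> {0..1} \<Longrightarrow> t \<in> {0..1} \<Longrightarrow> integrable lborel (\<lambda>x. (norm (vt s t x))\<^sup>2 * \<rho> s t x)"
    and Apos: "\<And>s t. s \<in> {0..1} \<Longrightarrow> t \<in> {0..1} \<Longrightarrow> Aarea \<rho> vs vt s t > 0"
    and gradPs: "\<And>s t x. s \<in> {0<..<1} \<Longrightarrow> t \<in> {0<..<1} \<Longrightarrow>
        inverse (Aarea \<rho> vs vt s t) *\<^sub>R (Gss \<rho> vt s t *\<^sub>R vs s t x - Gst \<rho> vs vt s t *\<^sub>R vt s t x)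
          = grad \<Phi>s s t x"
    and gradPt: "\<And>s t x. s \<in> {0<..<1} \<Longrightarrow> t \<in> {0<..<1} \<Longrightarrow>
        inverse (Aarea \<rho> vs vt s t) *\<^sub>R (Gss \<rho> vs s t *\<^sub>R vt s t x - Gst \<rho> vs vt s t *\<^sub>R vs s t x)
          = grad \<Phi>t s t x"
    and HJ: "\<And>s t x. s \<in> {0<..<1} \<Longrightarrow> t \<in> {0<..<1} \<Longrightarrow>
        ds \<Phi>s s t x + dt \<Phi>t s t x
        + inverse (Aarea \<rho> vs vt s t) *
            (1/2 * (norm (vs s t x))\<^sup>2 * Gss \<rho> vt s t + 1/2 * (norm (vt s t x))\<^sup>2 * Gss \<rho> vs s t
             - (vt s t x \<bullet> vs s t x) * Gst \<rho> vt vs s t) = 0"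
    and cont_s: "\<And>s t x. s \<in> {0<..<1} \<Longrightarrow> t \<in> {0<..<1} \<Longrightarrow>
        ds \<rho> s t x + divg (\<lambda>s t x. \<rho> s t x *\<^sub>R vs s t x) s t x = 0"
    and cont_t: "\<And>s t x. s \<in> {0<..<1} \<Longrightarrow> t \<in> {0<..<1} \<Longrightarrow>
        dt \<rho> s t x + divg (\<lambda>s t x. \<rho> s t x *\<^sub>R vt s t x) s t x = 0"
begin

lemma first_variation_density_eq:
  fixes r :: "real \<Rightarrow> real \<Rightarrow> real^'n \<Rightarrow> real" and a b :: "real \<Rightarrow> real \<Rightarrow> real^'n \<Rightarrow> real^'n"
  assumes r: "C1_on IntDom (unc r)" and st: "s \<in> {0<..<1}" "t \<in> {0<..<1}"
  shows "Aarea_density_var \<rho> vs vt r a b s t x + lag_density_var \<rho> vs vt \<Phi>s \<Phi>t r a b s t x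
      - (\<Phi>s s t x * divg (\<lambda>s t x. r s t x *\<^sub>R vs s t x + \<rho> s t x *\<^sub>R a s t x) s t x
         + grad \<Phi>s s t x \<bullet> (r s t x *\<^sub>R vs s t x + \<rho> s t x *\<^sub>R a s t x))
      - (\<Phi>t s t x * divg (\<lambda>s t x. r s t x *\<^sub>R vt s t x + \<rho> s t x *\<^sub>R b s t x) s t x
         + grad \<Phi>t s t x \<bullet> (r s t x *\<^sub>R vt s t x + \<rho> s t x *\<^sub>R b s t x))
    = ds (\<lambda>s t x. \<Phi>s s t x * r s t x) s t x + dt (\<lambda>s t x. \<Phi>t s t x * r s t x) s t x"
proof -
  have "Aarea_density_var \<rho> vs vt r a b s t x
      - grad \<Phi>s s t x \<bullet> (r s t x *\<^sub>R vs s t x + \<rho> s t x *\<^sub>R a s t x)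
      - grad \<Phi>t s t x \<bullet> (r s t x *\<^sub>R vt s t x + \<rho> s t x *\<^sub>R b s t x)
      = (ds \<Phi>s s t x + dt \<Phi>t s t x) * r s t x"
    unfolding Aarea_density_var_def Gst_density_var_def
    by (rule hamilton_jacobi_cancellation[OF gradPs[OF st, symmetric] gradPt[OF st, symmetric]])
       (use HJ[OF st, of x] in \<open>simp add: Gst_commute[of \<rho> vt vs]\<close>)
  moreover have "(s, t, x) \<in> IntDom"
    using st by simp
  ultimately show ?thesis
    using partials_mult(1)[OF C1(4) r] partials_mult(2)[OF C1(5) r]
    unfolding lag_density_var_def by (simp add: algebra_simps)
qed

lemma first_var_integrand_eq:
  fixes r p q :: "real \<Rightarrow> real \<Rightarrow> real^'n \<Rightarrow> real" and a b :: "real \<Rightarrow> real \<Rightarrow> real^'n \<Rightarrow> real^'n"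
  assumes pert: "C1_on IntDom (unc r)" "C1_on IntDom (unc a)" "C1_on IntDom (unc b)"
    and K: "compact K" "\<And>z. z \<notin> K \<Longrightarrow> unc r z = 0" "\<And>z. z \<notin> K \<Longrightarrow> unc a z = 0"
      "\<And>z. z \<notin> K \<Longrightarrow> unc b z = 0"
    and st: "s \<in> {0<..<1}" "t \<in> {0<..<1}"
  shows "(\<lambda>\<epsilon>. Aarea (pert \<rho> \<epsilon> r) (pert vs \<epsilon> a) (pert vt \<epsilon> b) s t) differentiable (at 0)"
    and "(\<lambda>\<epsilon>. lag_density (pert \<rho> \<epsilon> r) (pert vs \<epsilon> a) (pert vt \<epsilon> b) (pert \<Phi>s \<epsilon> p) (pert \<Phi>t \<epsilon> q) s t x)
          differentiable (at 0)"
    and "integrable lborel (\<lambda>x. deriv (\<lambda>\<epsilon>. lag_density (pert \<rho> \<epsilon> r) (pert vs \<epsilon> a) (pert vt \<epsilon> b)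
          (pert \<Phi>s \<epsilon> p) (pert \<Phi>t \<epsilon> q) s t x) 0)"
    and "first_var_integrand \<rho> vs vt \<Phi>s \<Phi>t r a b p q s t
          = (LINT x|lborel. ds (\<lambda>s t x. \<Phi>s s t x * r s t x) s t x + dt (\<lambda>s t x. \<Phi>t s t x * r s t x) s t x)"
proof -
  have st01: "s \<in> {0..1}" "t \<in> {0..1}"
    using st by auto
  obtain C where C: "compact C" "\<And>x. x \<notin> C \<Longrightarrow> (s, t, x) \<notin> K"
    using compact_slice_support[OF K(1)] by metis
  have rab_C: "r s t x = 0" "a s t x = 0" "b s t x = 0" if "x \<notin> C" for x
    using K(2-4)[OF C(2)[OF that]] by simp_all
  note slice = continuous_on_IntDom_slice[OF C1_on_imp_continuous_on st]
  note area = has_real_derivative_Aarea_pert[where \<rho>=\<rho> and vs=vs and vt=vt and r=r and a=a and b=b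
      and s=s and t=t, OF slice[OF C1(1)] slice[OF C1(2)] slice[OF C1(3)] slice[OF pert(1)]
      slice[OF pert(2)] slice[OF pert(3)] C(1) rab_C dens[OF st01] energy[OF st01] Apos[OF st01]]
  have lag: "((\<lambda>\<epsilon>. lag_density (pert \<rho> \<epsilon> r) (pert vs \<epsilon> a) (pert vt \<epsilon> b) (pert \<Phi>s \<epsilon> p) (pert \<Phi>t \<epsilon> q) s t x)
      has_real_derivative lag_density_var \<rho> vs vt \<Phi>s \<Phi>t r a b s t x) (at 0)" for x
    using has_real_derivative_lag_density_pert[OF C1(1-3) pert _ cont_s[OF st] cont_t[OF st]] st by simp
  then have deriv_lag: "(\<lambda>x. deriv (\<lambda>\<epsilon>. lag_density (pert \<rho> \<epsilon> r) (pert vs \<epsilon> a) (pert vt \<epsilon> b)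
      (pert \<Phi>s \<epsilon> p) (pert \<Phi>t \<epsilon> q) s t x) 0) = lag_density_var \<rho> vs vt \<Phi>s \<Phi>t r a b s t"
    using DERIV_imp_deriv by blast
  note L = integrable_lag_density_var[OF C1 pert K st]
  note Js = flux_var_C1_support[where K=K, OF C1(1,2) pert(1,2) K(2,3)]
    and Jt = flux_var_C1_support[where K=K, OF C1(1,3) pert(1,3) K(2,4)]
  note parts_s = integral_mult_divg_by_parts[OF C1(4) Js(1) st K(1) Js(2)]
    and parts_t = integral_mult_divg_by_parts[OF C1(5) Jt(1) st K(1) Jt(2)]
  show "(\<lambda>\<epsilon>. Aarea (pert \<rho> \<epsilon> r) (pert vs \<epsilon> a) (pert vt \<epsilon> b) s t) differentiable (at 0)"
    using area(2) real_differentiable_def by blast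
  show "(\<lambda>\<epsilon>. lag_density (pert \<rho> \<epsilon> r) (pert vs \<epsilon> a) (pert vt \<epsilon> b) (pert \<Phi>s \<epsilon> p) (pert \<Phi>t \<epsilon> q) s t x)
      differentiable (at 0)"
    using lag real_differentiable_def by blast
  show "integrable lborel (\<lambda>x. deriv (\<lambda>\<epsilon>. lag_density (pert \<rho> \<epsilon> r) (pert vs \<epsilon> a) (pert vt \<epsilon> b)
      (pert \<Phi>s \<epsilon> p) (pert \<Phi>t \<epsilon> q) s t x) 0)"
    unfolding deriv_lag by (rule L)
  have "first_var_integrand \<rho> vs vt \<Phi>s \<Phi>t r a b p q s t
      = (LINT x|lborel. Aarea_density_var \<rho> vs vt r a b s t x)
        + (LINT x|lborel. lag_density_var \<rho> vs vt \<Phi>s \<Phi>t r a b s t x)"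
    unfolding first_var_integrand_def deriv_lag using DERIV_imp_deriv[OF area(2)] by simp
  also have "\<dots> = (LINT x|lborel.
      Aarea_density_var \<rho> vs vt r a b s t x + lag_density_var \<rho> vs vt \<Phi>s \<Phi>t r a b s t x
      - (\<Phi>s s t x * divg (\<lambda>s t x. r s t x *\<^sub>R vs s t x + \<rho> s t x *\<^sub>R a s t x) s t x
         + grad \<Phi>s s t x \<bullet> (r s t x *\<^sub>R vs s t x + \<rho> s t x *\<^sub>R a s t x))
      - (\<Phi>t s t x * divg (\<lambda>s t x. r s t x *\<^sub>R vt s t x + \<rho> s t x *\<^sub>R b s t x) s t x
         + grad \<Phi>t s t x \<bullet> (r s t x *\<^sub>R vt s t x + \<rho> s t x *\<^sub>R b s t x)))"
    using area(1) L parts_s parts_t by simp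
  also have "\<dots> = (LINT x|lborel.
      ds (\<lambda>s t x. \<Phi>s s t x * r s t x) s t x + dt (\<lambda>s t x. \<Phi>t s t x * r s t x) s t x)"
    unfolding first_variation_density_eq[where a=a and b=b, OF pert(1) st] ..
  finally show "first_var_integrand \<rho> vs vt \<Phi>s \<Phi>t r a b p q s t
      = (LINT x|lborel. ds (\<lambda>s t x. \<Phi>s s t x * r s t x) s t x + dt (\<lambda>s t x. \<Phi>t s t x * r s t x) s t x)" .
qed

lemma first_variation_vanishes:
  fixes r p q :: "real \<Rightarrow> real \<Rightarrow> real^'n \<Rightarrow> real" and a b :: "real \<Rightarrow> real \<Rightarrow> real^'n \<Rightarrow> real^'n"
  assumes "test_fun r" "test_fun a" "test_fun b"
  shows "(\<forall>s\<in>{0<..<1}. \<forall>t\<in>{0<..<1}.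
         (\<lambda>\<epsilon>. Aarea (pert \<rho> \<epsilon> r) (pert vs \<epsilon> a) (pert vt \<epsilon> b) s t) differentiable (at 0)
       \<and> (\<forall>x. (\<lambda>\<epsilon>. lag_density (pert \<rho> \<epsilon> r) (pert vs \<epsilon> a) (pert vt \<epsilon> b)
                                (pert \<Phi>s \<epsilon> p) (pert \<Phi>t \<epsilon> q) s t x) differentiable (at 0))
       \<and> integrable lborel (\<lambda>x. deriv (\<lambda>\<epsilon>. lag_density (pert \<rho> \<epsilon> r) (pert vs \<epsilon> a) (pert vt \<epsilon> b)
                                (pert \<Phi>s \<epsilon> p) (pert \<Phi>t \<epsilon> q) s t x) 0))
      \<and> set_integrable lborel ({0<..<1} \<times> {0<..<1})
           (\<lambda>(s,t). first_var_integrand \<rho> vs vt \<Phi>s \<Phi>t r a b p q s t)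
      \<and> (LINT z:{0<..<1} \<times> {0<..<1}|lborel.
           (\<lambda>(s,t). first_var_integrand \<rho> vs vt \<Phi>s \<Phi>t r a b p q s t) z) = 0"
proof -
  obtain K where C1_pert: "C1_on IntDom (unc r)" "C1_on IntDom (unc a)" "C1_on IntDom (unc b)"
    and K: "compact K" "K \<subseteq> IntDom"
    and K0: "\<And>z. z \<notin> K \<Longrightarrow> unc r z = 0" "\<And>z. z \<notin> K \<Longrightarrow> unc a z = 0" "\<And>z. z \<notin> K \<Longrightarrow> unc b z = 0"
    using test_funs_common_support[OF assms] by blast
  note fv = first_var_integrand_eq[OF C1_pert K(1) K0]
  have C1_prod: "C1_on IntDom (unc (\<lambda>s t x. \<Phi>s s t x * r s t x))"
      "C1_on IntDom (unc (\<lambda>s t x. \<Phi>t s t x * r s t x))"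
    by (intro C1_on_unc_mult C1 C1_pert(1))+
  have prod0: "unc (\<lambda>s t x. \<Phi>s s t x * r s t x) z = 0" "unc (\<lambda>s t x. \<Phi>t s t x * r s t x) z = 0"
    if "z \<notin> K" for z
    using K0(1)[OF that] by (simp_all add: unc_eq)
  note H = integral_ds_plus_dt_eq_0[OF C1_prod K prod0]
  have inside: "(\<lambda>(s, t). first_var_integrand \<rho> vs vt \<Phi>s \<Phi>t r a b p q s t) y
      = (LINT x|lborel. (\<lambda>((s, t), x). ds (\<lambda>s t x. \<Phi>s s t x * r s t x) s t x
          + dt (\<lambda>s t x. \<Phi>t s t x * r s t x) s t x) (y, x))"
    if "y \<in> {0<..<1} \<times> {0<..<1}" for y
    using that fv(4) by (cases y) simp
  have outside: "(\<lambda>((s, t), x). ds (\<lambda>s t x. \<Phi>s s t x * r s t x) s t x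
      + dt (\<lambda>s t x. \<Phi>t s t x * r s t x) s t x) (y, x) = 0"
    if "y \<notin> {0<..<1} \<times> {0<..<1}" for y x
  proof -
    obtain s t where y: "y = (s, t)" by (cases y)
    then have "(s, t, x) \<notin> K"
      using that K(2) by auto
    then show ?thesis
      using partials_eq_0_outside_support(1)[OF compact_imp_closed[OF K(1)] prod0(1)]
        partials_eq_0_outside_support(2)[OF compact_imp_closed[OF K(1)] prod0(2)]
      by (simp add: y)
  qed
  show ?thesis
    using fv(1-3) set_integral_eq_0_Fubini[OF H inside outside] by blast
qed

end

theorem mainTheorem1:
  fixes \<rho> :: "real \<Rightarrow> real \<Rightarrow> real^'n \<Rightarrow> real"
    and vs vt :: "real \<Rightarrow> real \<Rightarrow> real^'n \<Rightarrow> real^'n"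
    and \<Phi>s \<Phi>t :: "real \<Rightarrow> real \<Rightarrow> real^'n \<Rightarrow> real"
  assumes C1: "C1_on Dom (unc \<rho>)" "C1_on Dom (unc vs)" "C1_on Dom (unc vt)"
    and C1\<Phi>: "C1_on Dom (unc \<Phi>s)" "C1_on Dom (unc \<Phi>t)"
    and dens: "\<And>s t x. s \<in> {0..1} \<Longrightarrow> t \<in> {0..1} \<Longrightarrow> \<rho> s t x \<ge> 0"
              "\<And>s t. s \<in> {0..1} \<Longrightarrow> t \<in> {0..1} \<Longrightarrow> integrable lborel (\<rho> s t)"
              "\<And>s t. s \<in> {0..1} \<Longrightarrow> t \<in> {0..1} \<Longrightarrow> (LINT x|lborel. \<rho> s t x) = 1"
              "\<And>s t. s \<in> {0..1} \<Longrightarrow> t \<in> {0..1} \<Longrightarrow> integrable lborel (\<lambda>x. (norm x)\<^sup>2 * \<rho> s t x)"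
    and energy: "\<And>s t. s \<in> {0..1} \<Longrightarrow> t \<in> {0..1} \<Longrightarrow> integrable lborel (\<lambda>x. (norm (vs s t x))\<^sup>2 * \<rho> s t x)"
                "\<And>s t. s \<in> {0..1} \<Longrightarrow> t \<in> {0..1} \<Longrightarrow> integrable lborel (\<lambda>x. (norm (vt s t x))\<^sup>2 * \<rho> s t x)"
    and Apos: "\<And>s t. s \<in> {0..1} \<Longrightarrow> t \<in> {0..1} \<Longrightarrow> Aarea \<rho> vs vt s t > 0"
    and gradPs: "\<And>s t x. s \<in> {0<..<1} \<Longrightarrow> t \<in> {0<..<1} \<Longrightarrow>
        inverse (Aarea \<rho> vs vt s t) *\<^sub>R (Gss \<rho> vt s t *\<^sub>R vs s t x - Gst \<rho> vs vt s t *\<^sub>R vt s t x)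
          = grad \<Phi>s s t x"
    and gradPt: "\<And>s t x. s \<in> {0<..<1} \<Longrightarrow> t \<in> {0<..<1} \<Longrightarrow>
        inverse (Aarea \<rho> vs vt s t) *\<^sub>R (Gss \<rho> vs s t *\<^sub>R vt s t x - Gst \<rho> vs vt s t *\<^sub>R vs s t x)
          = grad \<Phi>t s t x"
    and HJ: "\<And>s t x. s \<in> {0<..<1} \<Longrightarrow> t \<in> {0<..<1} \<Longrightarrow>
        ds \<Phi>s s t x + dt \<Phi>t s t x
        + inverse (Aarea \<rho> vs vt s t) *
            (1/2 * (norm (vs s t x))\<^sup>2 * Gss \<rho> vt s t + 1/2 * (norm (vt s t x))\<^sup>2 * Gss \<rho> vs s t
             - (vt s t x \<bullet> vs s t x) * Gst \<rho> vt vs s t) = 0"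
    and cont_s: "\<And>s t x. s \<in> {0<..<1} \<Longrightarrow> t \<in> {0<..<1} \<Longrightarrow>
        ds \<rho> s t x + divg (\<lambda>s t x. \<rho> s t x *\<^sub>R vs s t x) s t x = 0"
    and cont_t: "\<And>s t x. s \<in> {0<..<1} \<Longrightarrow> t \<in> {0<..<1} \<Longrightarrow>
        dt \<rho> s t x + divg (\<lambda>s t x. \<rho> s t x *\<^sub>R vt s t x) s t x = 0"
  shows "critical_point \<rho> vs vt \<Phi>s \<Phi>t"
proof -
  have "C1_on IntDom (unc \<rho>)" "C1_on IntDom (unc vs)" "C1_on IntDom (unc vt)"
    "C1_on IntDom (unc \<Phi>s)" "C1_on IntDom (unc \<Phi>t)"
    using C1 C1\<Phi> C1_on_subset[OF _ IntDom_subset_Dom] by blast+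
  note vanishes = first_variation_vanishes[OF this dens(1) energy Apos gradPs gradPt HJ cont_s cont_t]
  show ?thesis
    unfolding critical_point_def using vanishes by blast
qed

end
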